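(* Let $d\ge2$ and $n\ge1$. Then $$\dim_{\mathbb C}\big(A_{d,n}/R'(1)\big)=(2^{n-1}-1)d^2-(2^{n-1}-2)d,$$ and the images in $A_{d,n}/R'(1)$ of the monomials in $$\mathcal{B}_{d,n}(1)=\Big\{x_i^ax_{i+1}^b\prod_{j=i+2}^n x_j^{\epsilon_j}\;\Big|\;1\le i<n,\ 1\le a<d,\ 0\le b<d,\ \epsilon_j\in\{0,1\}\Big\}\cup\{x_n^b\mid 0\le b<d\}$$ form a basis of $A_{d,n}/R'(1)$. (For $d=2$, $\mathcal{B}_{2,n}(1)$ is the set of all monomials $x_1^{r_1}\cdots x_n^{r_n}$, $r_j\in\{0,1\}$; for $d>2$ it is the set of monomials $x_1^{r_1}\cdots x_n^{r_n}$, $r_j\in\{0,\dots,d-1\}$, not divisible by $x_ix_k^2$ for any $i<k$ with $k-i\ge2$.)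
   Context: $A_{d,n}$ is the complex group algebra of $(\mathbb Z/d\mathbb Z)^n$ with commuting generators $x_1,\dots,x_n$ satisfying $x_j^d=1$; it has basis the monomials $x_1^{r_1}\cdots x_n^{r_n}$, $r_j\in\{0,\dots,d-1\}$. A monomial $x_1^{a_1}\cdots x_n^{a_n}$ divides $x_1^{b_1}\cdots x_n^{b_n}$ (both with exponents in $\{0,\dots,d-1\}$) if $a_i\le b_i$ for all $i$. $R'(1)$ is the ideal of $A_{d,n}$ generated by the elements $(x_i-x_j)(x_i-x_k)(x_j-x_k)$ for $1\le i<j<k\le n$. *)

theory Defs
  imports Complex_Main "HOL-Library.FuncSet"
begin

text \<open>Model of the group algebra A_{d,n} = C[(Z/dZ)^n].
  A monomial x_1^{r_1}...x_n^{r_n} with r_j in {0..d-1} is identified with its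
  exponent vector r in PiE {1..n} ({..<d}).  An element of A_{d,n} is a
  complex-valued function on exponent vectors (its coefficient vector),
  vanishing outside the valid exponent vectors.\<close>

definition exps :: "nat \<Rightarrow> nat \<Rightarrow> (nat \<Rightarrow> nat) set" where
  "exps d n = PiE {1..n} (\<lambda>_. {..<d})"

type_synonym elem = "(nat \<Rightarrow> nat) \<Rightarrow> complex"

definition GA :: "nat \<Rightarrow> nat \<Rightarrow> elem set" where
  "GA d n = {a. \<forall>r. r \<notin> exps d n \<longrightarrow> a r = 0}"

definition mono :: "nat \<Rightarrow> nat \<Rightarrow> (nat \<Rightarrow> nat) \<Rightarrow> elem" where
  "mono d n r = (\<lambda>s. if s = r then 1 else 0)"

definition addexp :: "nat \<Rightarrow> nat \<Rightarrow> (nat \<Rightarrow> nat) \<Rightarrow> (nat \<Rightarrow> nat) \<Rightarrow> (nat \<Rightarrow> nat)" where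
  "addexp d n s t = restrict (\<lambda>j. (s j + t j) mod d) {1..n}"

definition gmult :: "nat \<Rightarrow> nat \<Rightarrow> elem \<Rightarrow> elem \<Rightarrow> elem" where
  "gmult d n a b = (\<lambda>r. \<Sum>s\<in>exps d n. \<Sum>t\<in>exps d n.
      if addexp d n s t = r then a s * b t else 0)"

definition gadd :: "elem \<Rightarrow> elem \<Rightarrow> elem" where
  "gadd a b = (\<lambda>r. a r + b r)"

definition gsub :: "elem \<Rightarrow> elem \<Rightarrow> elem" where
  "gsub a b = (\<lambda>r. a r - b r)"

definition gzero :: elem where
  "gzero = (\<lambda>r. 0)"

definition var :: "nat \<Rightarrow> nat \<Rightarrow> nat \<Rightarrow> elem" where
  "var d n i = mono d n (restrict (\<lambda>j. if j = i then 1 mod d else 0) {1..n})"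

definition gen3 :: "nat \<Rightarrow> nat \<Rightarrow> nat \<Rightarrow> nat \<Rightarrow> nat \<Rightarrow> elem" where
  "gen3 d n i j k = gmult d n (gmult d n (gsub (var d n i) (var d n j))
                                        (gsub (var d n i) (var d n k)))
                               (gsub (var d n j) (var d n k))"

inductive_set R1 :: "nat \<Rightarrow> nat \<Rightarrow> elem set" for d n where
  zero: "gzero \<in> R1 d n"
| gen: "1 \<le> i \<Longrightarrow> i < j \<Longrightarrow> j < k \<Longrightarrow> k \<le> n \<Longrightarrow> gen3 d n i j k \<in> R1 d n"
| add: "a \<in> R1 d n \<Longrightarrow> b \<in> R1 d n \<Longrightarrow> gadd a b \<in> R1 d n"
| mult: "c \<in> GA d n \<Longrightarrow> a \<in> R1 d n \<Longrightarrow> gmult d n c a \<in> R1 d n"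

definition lincomb :: "'i set \<Rightarrow> ('i \<Rightarrow> complex) \<Rightarrow> ('i \<Rightarrow> elem) \<Rightarrow> elem" where
  "lincomb I c b = (\<lambda>r. \<Sum>i\<in>I. c i * b i r)"

definition quot_basis :: "elem set \<Rightarrow> elem set \<Rightarrow> 'i set \<Rightarrow> ('i \<Rightarrow> elem) \<Rightarrow> bool" where
  "quot_basis A R I b \<longleftrightarrow>
     finite I \<and> (\<forall>i\<in>I. b i \<in> A) \<and>
     (\<forall>a\<in>A. \<exists>c. gsub a (lincomb I c b) \<in> R) \<and>
     (\<forall>c. lincomb I c b \<in> R \<longrightarrow> (\<forall>i\<in>I. c i = 0))"

definition quot_dim :: "elem set \<Rightarrow> elem set \<Rightarrow> nat" where
  "quot_dim A R = (THE m. \<exists>(I :: (nat \<Rightarrow> nat) set) b. card I = m \<and> quot_basis A R I b)"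

definition Bset :: "nat \<Rightarrow> nat \<Rightarrow> (nat \<Rightarrow> nat) set" where
  "Bset d n =
     {restrict (\<lambda>j. if j = i then a else if j = i + 1 then b
                     else if j \<ge> i + 2 then \<epsilon> j else 0) {1..n}
       | i a b \<epsilon>. 1 \<le> i \<and> i < n \<and> 1 \<le> a \<and> a < d \<and> b < d \<and> (\<forall>j. \<epsilon> j \<in> {0, 1})}
     \<union> {restrict (\<lambda>j. if j = n then b else 0) {1..n} | b. b < d}"

definition mdvd :: "nat \<Rightarrow> (nat \<Rightarrow> nat) \<Rightarrow> (nat \<Rightarrow> nat) \<Rightarrow> bool" where
  "mdvd n a b \<longleftrightarrow> (\<forall>j\<in>{1..n}. a j \<le> b j)"

definition xixk2 :: "nat \<Rightarrow> nat \<Rightarrow> nat \<Rightarrow> (nat \<Rightarrow> nat)" where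
  "xixk2 n i k = restrict (\<lambda>j. if j = i then 1 else if j = k then 2 else 0) {1..n}"

end

theory Submission
  imports Defs "HOL-Library.Function_Algebras"
begin

(* Evaluating at the points x_j = zeta^(k j), zeta a primitive d-th root of unity, identifies
   A_{d,n} with the functions on the characters k of (Z/dZ)^n (Fourier inversion).  A generator
   (x_i - x_j)(x_i - x_l)(x_j - x_l) is an invertible multiple of the idempotent of every character
   where it does not vanish, so R'(1) is exactly the set of elements vanishing on the characters
   with at most two distinct values, and A_{d,n}/R'(1) is the space of functions on them.
   The monomials of B_{d,n}(1) are independent on these characters: grouping them by the position p
   of their first nonzero exponent, differences of two-valued characters that agree beyond p isolate
   the monomials with leading index p, whose coefficients are then separated by multilinearity in the
   values on p+2..n and by discrete Fourier transforms in the exponents of x_p and x_(p+1).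
   An explicit injection of the two-valued characters into B_{d,n}(1) shows that these monomials
   also span, and counting B_{d,n}(1) by leading index gives the dimension. *)

section \<open>Roots of unity and discrete Fourier transforms\<close>

definition zeta :: "nat \<Rightarrow> complex" where
  "zeta d = cis (2 * pi / real d)"

lemma zeta_pow: "zeta d ^ m = cis (2 * pi * real m / real d)"
  unfolding zeta_def DeMoivre by (simp add: field_simps)

lemma zeta_nonzero [simp]: "zeta d \<noteq> 0"
  by (simp add: zeta_def)

lemma zeta_pow_period: "0 < d \<Longrightarrow> zeta d ^ d = 1"
  by (simp add: zeta_pow)

lemma pow_mod_period:
  assumes "(z :: 'a :: monoid_mult) ^ d = 1" shows "z ^ m = z ^ (m mod d)"
proof -
  have "z ^ m = z ^ (d * (m div d) + m mod d)" by simp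
  also have "\<dots> = (z ^ d) ^ (m div d) * z ^ (m mod d)" by (simp only: power_add power_mult)
  finally show ?thesis using assms by simp
qed

lemma zeta_pow_ne_1: assumes "0 < m" "m < d" shows "zeta d ^ m \<noteq> 1"
proof
  assume "zeta d ^ m = 1"
  hence "cos (2 * pi * real m / real d) = 1"
    unfolding zeta_pow by (metis cis.sel(1) one_complex.sel(1))
  then obtain z :: int where z: "2 * pi * real m / real d = real_of_int z * 2 * pi"
    using cos_one_2pi_int by meson
  have "real m / real d = (2 * pi * real m / real d) / (2 * pi)" by simp
  also have "\<dots> = real_of_int z" using z by simp
  moreover have "0 < real m / real d" "real m / real d < 1" using assms by auto
  ultimately show False by simp
qed

lemma zeta_pow_inj: assumes "a < d" "b < d" "zeta d ^ a = zeta d ^ b" shows "a = b"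
proof -
  have diff: "zeta d ^ (j - i) = 1" if "i \<le> j" "zeta d ^ i = zeta d ^ j" for i j
  proof -
    have "zeta d ^ i * zeta d ^ (j - i) = zeta d ^ j"
      using that(1) by (simp add: power_add[symmetric])
    hence "zeta d ^ i * zeta d ^ (j - i) = zeta d ^ i * 1" using that(2) by simp
    thus ?thesis by simp
  qed
  show ?thesis
  proof (rule linorder_cases[of a b])
    assume "a < b"
    thus ?thesis using diff[of a b] zeta_pow_ne_1[of "b - a" d] assms by simp
  next
    assume "b < a"
    thus ?thesis using diff[of b a] zeta_pow_ne_1[of "a - b" d] assms by simp
  qed
qed

lemma sum_zeta_pow_ratio:
  assumes "x < d" "y < d"
  shows "(\<Sum>t<d. (zeta d ^ x / zeta d ^ y) ^ t) = (if x = y then of_nat d else 0)"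
proof (cases "x = y")
  case False
  let ?z = "zeta d ^ x / zeta d ^ y"
  have "?z \<noteq> 1" using zeta_pow_inj[OF assms] False by auto
  moreover have "?z ^ d = (zeta d ^ d) ^ x / (zeta d ^ d) ^ y"
    by (simp only: power_divide power_mult[symmetric] mult.commute)
  hence "?z ^ d = 1" using zeta_pow_period[of d] assms by simp
  ultimately show ?thesis using False by (simp add: geometric_sum)
qed simp

lemma dft_eq_0_imp_eq_0:
  assumes "\<And>\<alpha>. \<alpha> < d \<Longrightarrow> (\<Sum>b<d. g b * (zeta d ^ \<alpha>) ^ b) = 0" and "c < d"
  shows "g c = 0"
proof -
  have swap: "(zeta d ^ \<alpha>) ^ b / (zeta d ^ \<alpha>) ^ c = (zeta d ^ b / zeta d ^ c) ^ \<alpha>" for \<alpha> b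
    by (simp only: power_divide power_mult[symmetric] mult.commute)
  have "0 = (\<Sum>\<alpha><d. (\<Sum>b<d. g b * (zeta d ^ \<alpha>) ^ b) / (zeta d ^ \<alpha>) ^ c)"
    using assms(1) by simp
  also have "\<dots> = (\<Sum>\<alpha><d. \<Sum>b<d. g b * (zeta d ^ b / zeta d ^ c) ^ \<alpha>)"
    by (simp only: sum_divide_distrib times_divide_eq_right[symmetric] swap)
  also have "\<dots> = (\<Sum>b<d. g b * (\<Sum>\<alpha><d. (zeta d ^ b / zeta d ^ c) ^ \<alpha>))"
    by (subst sum.swap) (simp add: sum_distrib_left)
  also have "\<dots> = (\<Sum>b<d. if b = c then g b * of_nat d else 0)"
    by (rule sum.cong) (auto simp: sum_zeta_pow_ratio assms(2))
  also have "\<dots> = g c * of_nat d" using assms(2) by simp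
  finally show ?thesis using assms(2) by simp
qed

lemma dft_const_imp_eq_0:
  assumes "\<And>\<alpha>. \<alpha> < d \<Longrightarrow> (\<Sum>b<d. g b * (zeta d ^ \<alpha>) ^ b) = K" and "0 < c" "c < d"
  shows "g c = 0"
proof -
  have "(\<lambda>b. g b - (if b = 0 then K else 0)) c = 0"
  proof (rule dft_eq_0_imp_eq_0[OF _ \<open>c < d\<close>])
    fix \<alpha> assume "\<alpha> < d"
    have "(\<Sum>b<d. (if b = 0 then K else 0) * (zeta d ^ \<alpha>) ^ b) = (\<Sum>b<d. if b = 0 then K else 0)"
      by (rule sum.cong) auto
    also have "\<dots> = K" using \<open>\<alpha> < d\<close> by simp
    finally show "(\<Sum>b<d. (g b - (if b = 0 then K else 0)) * (zeta d ^ \<alpha>) ^ b) = 0"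
      using assms(1)[OF \<open>\<alpha> < d\<close>] by (simp only: left_diff_distrib sum_subtractf) simp
  qed
  thus ?thesis using \<open>0 < c\<close> by simp
qed

section \<open>Products over subsets\<close>

lemma sum_Pow_insert_product:
  fixes u v :: "'b :: comm_semiring_1"
  assumes "finite M" "x \<notin> M" "T \<subseteq> M"
  defines "P \<equiv> \<lambda>T S. \<Prod>j\<in>S. if j \<in> T then v else u"
  shows "(\<Sum>S\<in>Pow (insert x M). g S * P T S) = (\<Sum>S\<in>Pow M. g S * P T S) + u * (\<Sum>S\<in>Pow M. g (insert x S) * P T S)"
    and "(\<Sum>S\<in>Pow (insert x M). g S * P (insert x T) S)
       = (\<Sum>S\<in>Pow M. g S * P T S) + v * (\<Sum>S\<in>Pow M. g (insert x S) * P T S)"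
proof -
  have disj: "Pow M \<inter> insert x ` Pow M = {}" and inj: "inj_on (insert x) (Pow M)"
    using assms(2) by (auto simp: inj_on_def)
  have split: "(\<Sum>S\<in>Pow (insert x M). f S) = (\<Sum>S\<in>Pow M. f S) + (\<Sum>S\<in>Pow M. f (insert x S))" for f
    using assms(1) unfolding Pow_insert by (simp add: sum.union_disjoint[OF _ _ disj] sum.reindex[OF inj])
  have P_insert: "P T' (insert x S) = (if x \<in> T' then v else u) * P T' S" if "S \<subseteq> M" for T' S
    using that assms(1,2) finite_subset unfolding P_def by (subst prod.insert) auto
  have P_ins_T: "P (insert x T) S = P T S" if "S \<subseteq> M" for S
    using that assms(2) unfolding P_def by (intro prod.cong) auto
  show "(\<Sum>S\<in>Pow (insert x M). g S * P T S) = (\<Sum>S\<in>Pow M. g S * P T S) + u * (\<Sum>S\<in>Pow M. g (insert x S) * P T S)"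
    using assms(2,3) unfolding split sum_distrib_left
    by (intro arg_cong2[where f = "(+)"] sum.cong refl) (auto simp: P_insert mult.left_commute)
  show "(\<Sum>S\<in>Pow (insert x M). g S * P (insert x T) S)
       = (\<Sum>S\<in>Pow M. g S * P T S) + v * (\<Sum>S\<in>Pow M. g (insert x S) * P T S)"
    unfolding split sum_distrib_left
    by (intro arg_cong2[where f = "(+)"] sum.cong refl) (auto simp: P_insert P_ins_T mult.left_commute)
qed

lemma subset_product_coeffs_eq_0:
  fixes u v :: "'b :: idom"
  assumes "finite M" "u \<noteq> v"
    and "\<And>T. T \<subseteq> M \<Longrightarrow> (\<Sum>S\<in>Pow M. g S * (\<Prod>j\<in>S. if j \<in> T then v else u)) = 0"
    and "S \<subseteq> M"
  shows "g S = 0"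
  using assms(1,3,4)
proof (induction M arbitrary: g S rule: finite_induct)
  case empty
  thus ?case using empty.prems(1)[of "{}"] by simp
next
  case (insert x M)
  define A where "A g T = (\<Sum>S\<in>Pow M. g S * (\<Prod>j\<in>S. if j \<in> T then v else u))" for g and T
  let ?g' = "\<lambda>S. g (insert x S)"
  have "A g T + u * A ?g' T = 0" "A g T + v * A ?g' T = 0" if "T \<subseteq> M" for T
    using insert.prems(1)[of T] insert.prems(1)[of "insert x T"] that
      sum_Pow_insert_product[OF insert.hyps that, of g v u]
    unfolding A_def by auto
  moreover from this have "A ?g' T = 0" if "T \<subseteq> M" for T
    using that assms(2) by (metis add_left_imp_eq mult_cancel_right)
  ultimately have "A g T = 0" "A ?g' T = 0" if "T \<subseteq> M" for T
    using that by simp_all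
  hence "g S = 0" "?g' S = 0" if "S \<subseteq> M" for S
    using insert.IH[of g S] insert.IH[of ?g' S] that unfolding A_def by blast+
  moreover have "S - {x} \<subseteq> M" using insert.prems(2) by auto
  ultimately show ?case by (metis insert_Diff Diff_empty Diff_insert0)
qed

section \<open>Evaluation at characters\<close>

(* chi d n k r is the monomial x^r at the point x_j = zeta^(k j). *)
definition chi :: "nat \<Rightarrow> nat \<Rightarrow> (nat \<Rightarrow> nat) \<Rightarrow> (nat \<Rightarrow> nat) \<Rightarrow> complex" where
  "chi d n k r = (\<Prod>j\<in>{1..n}. (zeta d ^ k j) ^ r j)"

definition eval_char :: "nat \<Rightarrow> nat \<Rightarrow> (nat \<Rightarrow> nat) \<Rightarrow> elem \<Rightarrow> complex" where
  "eval_char d n k a = (\<Sum>s\<in>exps d n. a s * chi d n k s)"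

(* The characters at which all generators of R'(1) vanish. *)
definition variety :: "nat \<Rightarrow> nat \<Rightarrow> (nat \<Rightarrow> nat) set" where
  "variety d n = {k \<in> exps d n. \<forall>i j l. 1 \<le> i \<longrightarrow> i < j \<longrightarrow> j < l \<longrightarrow> l \<le> n \<longrightarrow>
       k i = k j \<or> k i = k l \<or> k j = k l}"

definition idempotent :: "nat \<Rightarrow> nat \<Rightarrow> (nat \<Rightarrow> nat) \<Rightarrow> elem" where
  "idempotent d n k = (\<lambda>r. if r \<in> exps d n then 1 / (of_nat d ^ n * chi d n k r) else 0)"

lemma finite_exps [simp]: "finite (exps d n)"
  unfolding exps_def by (intro finite_PiE) auto

lemma exps_eqI:
  "x \<in> exps d n \<Longrightarrow> y \<in> exps d n \<Longrightarrow> (\<And>j. 1 \<le> j \<Longrightarrow> j \<le> n \<Longrightarrow> x j = y j) \<Longrightarrow> x = y"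
  unfolding exps_def by (rule PiE_ext) auto

lemma restrict_in_exps: "(\<And>j. 1 \<le> j \<Longrightarrow> j \<le> n \<Longrightarrow> f j < d) \<Longrightarrow> restrict f {1..n} \<in> exps d n"
  unfolding exps_def by auto

lemma exps_less: "r \<in> exps d n \<Longrightarrow> 1 \<le> j \<Longrightarrow> j \<le> n \<Longrightarrow> r j < d"
  unfolding exps_def by auto

lemma addexp_in_exps: "0 < d \<Longrightarrow> addexp d n s t \<in> exps d n"
  unfolding addexp_def exps_def by auto

lemma finite_variety [simp]: "finite (variety d n)"
  by (rule finite_subset[of _ "exps d n"]) (auto simp: variety_def)

lemma chi_nonzero [simp]: "chi d n k r \<noteq> 0"
  by (simp add: chi_def)

lemma chi_sym: "chi d n k r = chi d n r k"
  unfolding chi_def by (simp only: power_mult[symmetric] mult.commute)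

lemma chi_addexp:
  assumes "0 < d" shows "chi d n k (addexp d n s t) = chi d n k s * chi d n k t"
proof -
  have period: "(zeta d ^ k j) ^ d = 1" for j
    using zeta_pow_period[OF assms] by (simp only: power_mult[symmetric] mult.commute) (simp add: power_mult)
  have "chi d n k (addexp d n s t) = (\<Prod>j\<in>{1..n}. (zeta d ^ k j) ^ ((s j + t j) mod d))"
    unfolding chi_def addexp_def by (intro prod.cong) auto
  also have "\<dots> = (\<Prod>j\<in>{1..n}. (zeta d ^ k j) ^ s j * (zeta d ^ k j) ^ t j)"
    by (intro prod.cong refl) (metis pow_mod_period[OF period] power_add)
  finally show ?thesis unfolding chi_def by (simp add: prod.distrib)
qed

lemma sum_chi_ratio:
  assumes "0 < d" "x \<in> exps d n" "y \<in> exps d n"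
  shows "(\<Sum>k\<in>exps d n. chi d n k x / chi d n k y) = (if x = y then of_nat d ^ n else 0)"
proof -
  have "(\<Sum>k\<in>exps d n. chi d n k x / chi d n k y)
      = (\<Sum>k\<in>exps d n. \<Prod>j\<in>{1..n}. (zeta d ^ x j / zeta d ^ y j) ^ k j)"
    unfolding chi_def prod_dividef[symmetric]
    by (simp only: power_divide power_mult[symmetric] mult.commute)
  also have "\<dots> = (\<Prod>j\<in>{1..n}. \<Sum>t<d. (zeta d ^ x j / zeta d ^ y j) ^ t)"
    unfolding exps_def by (rule prod_sum_PiE[symmetric]) auto
  also have "\<dots> = (\<Prod>j\<in>{1..n}. if x j = y j then of_nat d else 0)"
    using assms(2,3) by (intro prod.cong refl) (simp add: sum_zeta_pow_ratio exps_less)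
  also have "\<dots> = (if x = y then of_nat d ^ n else 0)"
  proof (cases "x = y")
    case False
    then obtain j where "1 \<le> j" "j \<le> n" "x j \<noteq> y j" using exps_eqI assms(2,3) by blast
    thus ?thesis using False by (auto intro!: prod_zero)
  qed simp
  finally show ?thesis .
qed

lemma eval_char_add: "eval_char d n k (gadd a b) = eval_char d n k a + eval_char d n k b"
  unfolding eval_char_def gadd_def by (simp add: sum.distrib distrib_right)

lemma eval_char_sub: "eval_char d n k (gsub a b) = eval_char d n k a - eval_char d n k b"
  unfolding eval_char_def gsub_def by (simp add: sum_subtractf left_diff_distrib)

lemma eval_char_zero: "eval_char d n k gzero = 0"
  unfolding eval_char_def gzero_def by simp

lemma eval_char_lincomb:
  "eval_char d n k (lincomb I c b) = (\<Sum>i\<in>I. c i * eval_char d n k (b i))"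
  unfolding eval_char_def lincomb_def sum_distrib_right sum_distrib_left
  by (subst sum.swap) (simp add: mult.assoc)

lemma eval_char_mult:
  assumes "0 < d"
  shows "eval_char d n k (gmult d n a b) = eval_char d n k a * eval_char d n k b"
proof -
  let ?E = "exps d n"
  have "eval_char d n k (gmult d n a b)
      = (\<Sum>r\<in>?E. \<Sum>s\<in>?E. \<Sum>t\<in>?E. if addexp d n s t = r then a s * b t * chi d n k r else 0)"
    unfolding eval_char_def gmult_def sum_distrib_right by (intro sum.cong refl) auto
  also have "\<dots> = (\<Sum>s\<in>?E. \<Sum>t\<in>?E. \<Sum>r\<in>?E. if addexp d n s t = r then a s * b t * chi d n k r else 0)"
    by (subst sum.swap) (rule sum.cong[OF refl], rule sum.swap)
  also have "\<dots> = (\<Sum>s\<in>?E. \<Sum>t\<in>?E. (a s * chi d n k s) * (b t * chi d n k t))"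
    by (intro sum.cong refl) (simp add: addexp_in_exps chi_addexp assms mult_ac)
  finally show ?thesis unfolding eval_char_def sum_product .
qed

lemma eval_char_mono: "r \<in> exps d n \<Longrightarrow> eval_char d n k (mono d n r) = chi d n k r"
  unfolding eval_char_def mono_def by (simp add: if_distrib[of "\<lambda>x. x * _"] sum.delta' cong: if_cong)

lemma eval_char_var:
  assumes "2 \<le> d" "1 \<le> i" "i \<le> n" shows "eval_char d n k (var d n i) = zeta d ^ k i"
proof -
  let ?e = "restrict (\<lambda>j. if j = i then 1 mod d else 0) {1..n}"
  have "?e \<in> exps d n" using assms unfolding exps_def by auto
  moreover have "chi d n k ?e = (\<Prod>j\<in>{1..n}. if j = i then zeta d ^ k i else 1)"
    unfolding chi_def using assms by (intro prod.cong refl) auto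
  ultimately show ?thesis using assms unfolding var_def by (simp add: eval_char_mono prod.delta)
qed

lemma eval_char_gen3:
  assumes "2 \<le> d" "1 \<le> i" "i < j" "j < l" "l \<le> n"
  shows "eval_char d n k (gen3 d n i j l)
    = (zeta d ^ k i - zeta d ^ k j) * (zeta d ^ k i - zeta d ^ k l) * (zeta d ^ k j - zeta d ^ k l)"
  unfolding gen3_def using assms by (simp add: eval_char_mult eval_char_sub eval_char_var)

lemma eval_char_idempotent:
  assumes "0 < d" "k \<in> exps d n" "k' \<in> exps d n"
  shows "eval_char d n k' (idempotent d n k) = (if k' = k then 1 else 0)"
proof -
  have "eval_char d n k' (idempotent d n k) = (\<Sum>r\<in>exps d n. chi d n r k' / chi d n r k) / of_nat d ^ n"
    unfolding eval_char_def idempotent_def sum_divide_distrib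
    by (intro sum.cong refl) (simp add: chi_sym[of d n k'] chi_sym[of d n k])
  thus ?thesis using assms by (simp add: sum_chi_ratio)
qed

lemma fourier_inversion:
  assumes "0 < d" "a \<in> GA d n"
  shows "a = (\<lambda>r. \<Sum>k\<in>exps d n. eval_char d n k a * idempotent d n k r)"
proof
  fix r show "a r = (\<Sum>k\<in>exps d n. eval_char d n k a * idempotent d n k r)"
  proof (cases "r \<in> exps d n")
    case False thus ?thesis using assms(2) by (simp add: GA_def idempotent_def)
  next
    case True
    have "(\<Sum>k\<in>exps d n. eval_char d n k a * idempotent d n k r)
        = (\<Sum>s\<in>exps d n. a s * ((\<Sum>k\<in>exps d n. chi d n k s / chi d n k r) / of_nat d ^ n))"
      unfolding eval_char_def idempotent_def sum_distrib_right sum_divide_distrib sum_distrib_left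
      using True by (subst sum.swap) (simp add: field_simps)
    also have "\<dots> = (\<Sum>s\<in>exps d n. if s = r then a s else 0)"
      using True assms(1) by (intro sum.cong refl) (simp add: sum_chi_ratio)
    also have "\<dots> = a r" using True by simp
    finally show ?thesis by simp
  qed
qed

section \<open>The ideal R'(1) and its zero set\<close>

lemma gmult_in_GA: "0 < d \<Longrightarrow> gmult d n a b \<in> GA d n"
  unfolding GA_def gmult_def using addexp_in_exps by (auto intro!: sum.neutral)

lemma R1_subset_GA: assumes "0 < d" shows "R1 d n \<subseteq> GA d n"
proof
  fix a assume "a \<in> R1 d n"
  thus "a \<in> GA d n"
  proof induction
    case zero thus ?case by (simp add: GA_def gzero_def)
  next
    case gen show ?case unfolding gen3_def by (rule gmult_in_GA[OF assms])
  next
    case add thus ?case by (simp add: GA_def gadd_def)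
  next
    case mult show ?case by (rule gmult_in_GA[OF assms])
  qed
qed

lemma lincomb_in_GA: "(\<And>i. i \<in> I \<Longrightarrow> b i \<in> GA d n) \<Longrightarrow> lincomb I c b \<in> GA d n"
  unfolding GA_def lincomb_def by auto

lemma idempotent_in_GA: "idempotent d n k \<in> GA d n"
  unfolding GA_def idempotent_def by auto

lemma eval_char_scale: "eval_char d n k (\<lambda>r. c * a r) = c * eval_char d n k a"
  unfolding eval_char_def by (simp add: sum_distrib_left mult_ac)

lemma eval_char_eq_imp_eq:
  assumes "0 < d" "a \<in> GA d n" "b \<in> GA d n"
    and "\<And>k. k \<in> exps d n \<Longrightarrow> eval_char d n k a = eval_char d n k b"
  shows "a = b"
  using fourier_inversion[OF assms(1,2)] fourier_inversion[OF assms(1,3)] assms(4) by simp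

lemma eval_char_R1:
  assumes "2 \<le> d" "a \<in> R1 d n" "k \<in> variety d n" shows "eval_char d n k a = 0"
  using assms(2)
proof induction
  case (gen i j l)
  hence "k i = k j \<or> k i = k l \<or> k j = k l" using assms(3) unfolding variety_def by blast
  thus ?case using gen assms(1) by (auto simp: eval_char_gen3)
qed (use assms(1) in \<open>simp_all add: eval_char_zero eval_char_add eval_char_mult\<close>)

lemma R1_sum:
  assumes "finite S" "\<And>x. x \<in> S \<Longrightarrow> f x \<in> R1 d n"
  shows "(\<lambda>r. \<Sum>x\<in>S. f x r) \<in> R1 d n"
  using assms
proof (induction S rule: finite_induct)
  case empty
  thus ?case using R1.zero by (simp add: gzero_def)
next
  case (insert x S)
  hence "gadd (f x) (\<lambda>r. \<Sum>x\<in>S. f x r) \<in> R1 d n" by (simp add: R1.add)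
  thus ?case using insert.hyps by (simp add: gadd_def)
qed

lemma idempotent_multiple_in_R1:
  assumes "2 \<le> d" "k \<in> exps d n" "k \<notin> variety d n"
  shows "(\<lambda>r. c * idempotent d n k r) \<in> R1 d n"
proof -
  have d0: "0 < d" using assms by simp
  obtain i j l where ijl: "1 \<le> i" "i < j" "j < l" "l \<le> n" "k i \<noteq> k j" "k i \<noteq> k l" "k j \<noteq> k l"
    using assms(2,3) unfolding variety_def by blast
  let ?g = "eval_char d n k (gen3 d n i j l)"
  have lt: "k i < d" "k j < d" "k l < d" using ijl exps_less[OF assms(2)] by auto
  have "?g \<noteq> 0"
    using zeta_pow_inj[OF lt(1,2)] zeta_pow_inj[OF lt(1,3)] zeta_pow_inj[OF lt(2,3)] ijl
    by (auto simp: eval_char_gen3 assms(1))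
  let ?c = "\<lambda>r. (c / ?g) * idempotent d n k r"
  have "?c \<in> GA d n" using idempotent_in_GA[of d n k] by (simp add: GA_def)
  hence "gmult d n ?c (gen3 d n i j l) \<in> R1 d n" by (rule R1.mult[OF _ R1.gen[OF ijl(1-4)]])
  moreover have "gmult d n ?c (gen3 d n i j l) = (\<lambda>r. c * idempotent d n k r)"
  proof (rule eval_char_eq_imp_eq[OF d0 gmult_in_GA[OF d0]])
    show "(\<lambda>r. c * idempotent d n k r) \<in> GA d n" using idempotent_in_GA[of d n k] by (simp add: GA_def)
    fix k' assume k': "k' \<in> exps d n"
    have "eval_char d n k' ?c = c / ?g * (if k' = k then 1 else 0)"
      by (simp only: eval_char_scale eval_char_idempotent[OF d0 assms(2) k'])
    moreover have "eval_char d n k' (\<lambda>r. c * idempotent d n k r) = c * (if k' = k then 1 else 0)"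
      by (simp only: eval_char_scale eval_char_idempotent[OF d0 assms(2) k'])
    ultimately show "eval_char d n k' (gmult d n ?c (gen3 d n i j l))
        = eval_char d n k' (\<lambda>r. c * idempotent d n k r)"
      using \<open>?g \<noteq> 0\<close> by (simp add: eval_char_mult[OF d0])
  qed
  ultimately show ?thesis by simp
qed

lemma mem_R1_iff:
  assumes "2 \<le> d"
  shows "a \<in> R1 d n \<longleftrightarrow> a \<in> GA d n \<and> (\<forall>k\<in>variety d n. eval_char d n k a = 0)"
proof safe
  assume a: "a \<in> GA d n" and van: "\<forall>k\<in>variety d n. eval_char d n k a = 0"
  have "a = (\<lambda>r. \<Sum>k\<in>exps d n. eval_char d n k a * idempotent d n k r)"
    using assms a by (intro fourier_inversion) auto
  also have "\<dots> = (\<lambda>r. \<Sum>k\<in>exps d n - variety d n. eval_char d n k a * idempotent d n k r)"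
    using van by (intro ext sum.mono_neutral_right) (auto simp: variety_def)
  also have "\<dots> \<in> R1 d n"
    using assms by (intro R1_sum idempotent_multiple_in_R1) auto
  finally show "a \<in> R1 d n" .
qed (use assms R1_subset_GA[of d n] eval_char_R1 in auto)

section \<open>The monomials B_{d,n}(1)\<close>

(* B_{d,n}(1) in the divisibility description of the theorem (see Bset_eq_Bmon). *)
definition Bmon :: "nat \<Rightarrow> nat \<Rightarrow> (nat \<Rightarrow> nat) set" where
  "Bmon d n = {r \<in> exps d n. \<forall>i k. 1 \<le> i \<longrightarrow> i + 2 \<le> k \<longrightarrow> k \<le> n \<longrightarrow> 1 \<le> r i \<longrightarrow> r k \<le> 1}"

definition Bmon_from :: "nat \<Rightarrow> nat \<Rightarrow> nat \<Rightarrow> (nat \<Rightarrow> nat) set" where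
  "Bmon_from d n p = {r \<in> Bmon d n. \<forall>j. 1 \<le> j \<and> j < p \<longrightarrow> r j = 0}"

definition Bmon_lead :: "nat \<Rightarrow> nat \<Rightarrow> nat \<Rightarrow> (nat \<Rightarrow> nat) set" where
  "Bmon_lead d n p = {r \<in> Bmon_from d n p. r p \<noteq> 0}"

definition lead_mono :: "nat \<Rightarrow> nat \<Rightarrow> nat \<times> nat \<times> nat set \<Rightarrow> (nat \<Rightarrow> nat)" where
  "lead_mono n p = (\<lambda>(a, b, S).
     restrict (\<lambda>j. if j = p then a else if j = p + 1 then b else if j \<in> S then 1 else 0) {1..n})"

definition lead_params :: "nat \<Rightarrow> nat \<Rightarrow> nat \<Rightarrow> (nat \<times> nat \<times> nat set) set" where
  "lead_params d n p = {1..<d} \<times> {..<d} \<times> Pow {p + 2..n}"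

definition last_mono :: "nat \<Rightarrow> nat \<Rightarrow> (nat \<Rightarrow> nat)" where
  "last_mono n b = restrict (\<lambda>j. if j = n then b else 0) {1..n}"

lemma finite_Bmon [simp]: "finite (Bmon d n)"
  unfolding Bmon_def by simp

lemma Bmon_subset_exps: "Bmon d n \<subseteq> exps d n"
  unfolding Bmon_def by auto

lemma Bmon_from_1: "Bmon_from d n 1 = Bmon d n"
  unfolding Bmon_from_def by auto

lemma Bmon_from_Suc:
  assumes "1 \<le> p"
  shows "Bmon_from d n p = Bmon_from d n (Suc p) \<union> Bmon_lead d n p"
    and "Bmon_from d n (Suc p) \<inter> Bmon_lead d n p = {}"
  using assms unfolding Bmon_from_def Bmon_lead_def by (auto simp: less_Suc_eq)

lemma lead_mono_eq:
  "lead_mono n p (a, b, S)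
     = restrict (\<lambda>j. if j = p then a else if j = p + 1 then b else if j \<in> S then 1 else 0) {1..n}"
  unfolding lead_mono_def by simp

lemma lead_mono_apply:
  "1 \<le> j \<Longrightarrow> j \<le> n \<Longrightarrow>
     lead_mono n p (a, b, S) j = (if j = p then a else if j = p + 1 then b else if j \<in> S then 1 else 0)"
  unfolding lead_mono_eq by simp

lemma Bmon_leadI:
  assumes "r \<in> exps d n" "1 \<le> p" "\<And>j. 1 \<le> j \<Longrightarrow> j < p \<Longrightarrow> r j = 0" "r p \<noteq> 0"
    and "\<And>k. p + 2 \<le> k \<Longrightarrow> k \<le> n \<Longrightarrow> r k \<le> 1"
  shows "r \<in> Bmon_lead d n p"
proof -
  have "r k \<le> 1" if "1 \<le> i" "i + 2 \<le> k" "k \<le> n" "1 \<le> r i" for i k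
  proof -
    have "p \<le> i" using assms(3)[of i] that by (cases "i < p") auto
    thus ?thesis using assms(5) that by simp
  qed
  thus ?thesis using assms unfolding Bmon_lead_def Bmon_from_def Bmon_def by blast
qed

lemma Bmon_leadD:
  assumes "1 \<le> p" "r \<in> Bmon_lead d n p"
  shows "r \<in> exps d n" "\<And>j. 1 \<le> j \<Longrightarrow> j < p \<Longrightarrow> r j = 0" "r p \<noteq> 0"
    and "\<And>k. p + 2 \<le> k \<Longrightarrow> k \<le> n \<Longrightarrow> r k \<le> 1"
  using assms unfolding Bmon_lead_def Bmon_from_def Bmon_def by auto

lemma lead_mono_in_Bmon_lead:
  assumes "2 \<le> d" "1 \<le> p" "p < n" "x \<in> lead_params d n p"
  shows "lead_mono n p x \<in> Bmon_lead d n p"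
proof -
  obtain a b S where x: "x = (a, b, S)" "1 \<le> a" "a < d" "b < d" "S \<subseteq> {p + 2..n}"
    using assms(4) unfolding lead_params_def by auto
  have val: "lead_mono n p x j = (if j = p then a else if j = p + 1 then b else if j \<in> S then 1 else 0)"
    if "1 \<le> j" "j \<le> n" for j
    using that by (simp add: x(1) lead_mono_apply)
  show ?thesis
  proof (rule Bmon_leadI[OF _ assms(2)])
    show "lead_mono n p x \<in> exps d n"
      unfolding x(1) lead_mono_eq using x(3,4) assms(1) by (intro restrict_in_exps) auto
    show "lead_mono n p x j = 0" if "1 \<le> j" "j < p" for j
      using val[of j] that x(5) assms(3) by auto
    show "lead_mono n p x p \<noteq> 0" using val[of p] x(2) assms(2,3) by simp
    show "lead_mono n p x k \<le> 1" if "p + 2 \<le> k" "k \<le> n" for k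
      using val[of k] that by simp
  qed
qed

lemma Bmon_lead_eq_lead_mono:
  assumes "2 \<le> d" "1 \<le> p" "p < n" "r \<in> Bmon_lead d n p"
  defines "x \<equiv> (r p, r (p + 1), {j \<in> {p + 2..n}. r j = 1})"
  shows "x \<in> lead_params d n p" and "r = lead_mono n p x"
proof -
  note r = Bmon_leadD[OF assms(2,4)]
  have lt: "r j < d" if "1 \<le> j" "j \<le> n" for j using exps_less[OF r(1) that] .
  show "x \<in> lead_params d n p"
    using r(3) lt[of p] lt[of "p + 1"] assms(2,3) unfolding x_def lead_params_def by auto
  show "r = lead_mono n p x"
  proof (rule exps_eqI[OF r(1)])
    show "lead_mono n p x \<in> exps d n"
      unfolding x_def lead_mono_eq using lt assms(1-3) by (intro restrict_in_exps) auto
    fix j assume j: "1 \<le> j" "j \<le> n"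
    consider "j < p" | "j = p" | "j = p + 1" | "p + 2 \<le> j" by arith
    thus "r j = lead_mono n p x j"
    proof cases
      case 4 thus ?thesis using r(4)[OF 4 j(2)] j unfolding x_def by (auto simp: lead_mono_apply le_Suc_eq)
    qed (use j r(2) in \<open>auto simp: x_def lead_mono_apply\<close>)
  qed
qed

lemma bij_betw_lead_mono:
  assumes "2 \<le> d" "1 \<le> p" "p < n"
  shows "bij_betw (lead_mono n p) (lead_params d n p) (Bmon_lead d n p)"
proof (rule bij_betw_imageI)
  show "inj_on (lead_mono n p) (lead_params d n p)"
  proof (rule inj_onI)
    fix x y assume xy: "x \<in> lead_params d n p" "y \<in> lead_params d n p" "lead_mono n p x = lead_mono n p y"
    obtain a b S a' b' S' where [simp]: "x = (a, b, S)" "y = (a', b', S')" by (cases x, cases y) auto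
    have params: "(a, b, S) \<in> lead_params d n p" "(a', b', S') \<in> lead_params d n p"
      and eq: "lead_mono n p (a, b, S) = lead_mono n p (a', b', S')" using xy by simp_all
    have "a = a'" "b = b'" using fun_cong[OF eq, of p] fun_cong[OF eq, of "p + 1"] assms
      by (auto simp: lead_mono_apply)
    moreover have "S = S'"
    proof -
      have tail: "lead_mono n p (a, b, T) j = (if j \<in> T then 1 else 0)" if "j \<in> {p + 2..n}" for a b T j
        using that by (simp add: lead_mono_apply)
      have iff: "j \<in> S \<longleftrightarrow> j \<in> S'" if "j \<in> {p + 2..n}" for j
        using fun_cong[OF eq, of j] tail[OF that] by (cases "j \<in> S"; cases "j \<in> S'") simp_all
      have "S \<subseteq> {p + 2..n}" "S' \<subseteq> {p + 2..n}" using params by (simp_all add: lead_params_def)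
      thus ?thesis using iff by (intro equalityI subsetI) (meson subsetD)+
    qed
    ultimately show "x = y" by simp
  qed
  show "lead_mono n p ` lead_params d n p = Bmon_lead d n p"
  proof (rule equalityI)
    show "lead_mono n p ` lead_params d n p \<subseteq> Bmon_lead d n p"
      using lead_mono_in_Bmon_lead[OF assms] by (rule image_subsetI)
    show "Bmon_lead d n p \<subseteq> lead_mono n p ` lead_params d n p"
    proof
      fix r assume "r \<in> Bmon_lead d n p"
      from Bmon_lead_eq_lead_mono[OF assms this]
      show "r \<in> lead_mono n p ` lead_params d n p" by (rule rev_image_eqI)
    qed
  qed
qed

lemma bij_betw_last_mono:
  assumes "0 < d" "1 \<le> n"
  shows "bij_betw (last_mono n) {..<d} (Bmon_from d n n)"
proof (rule bij_betw_imageI)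
  have val: "last_mono n b j = (if j = n then b else 0)" if "1 \<le> j" "j \<le> n" for b j
    using that by (simp add: last_mono_def)
  show "inj_on (last_mono n) {..<d}"
    using val[OF assms(2) order_refl] by (intro inj_onI) metis
  show "last_mono n ` {..<d} = Bmon_from d n n"
  proof (intro equalityI subsetI)
    fix r assume "r \<in> last_mono n ` {..<d}"
    then obtain b where b: "b < d" "r = last_mono n b" by auto
    have "r \<in> exps d n" unfolding b(2) last_mono_def using b(1) assms(1) by (intro restrict_in_exps) auto
    thus "r \<in> Bmon_from d n n" using val b unfolding Bmon_from_def Bmon_def by auto
  next
    fix r assume r: "r \<in> Bmon_from d n n"
    hence "r \<in> exps d n" "\<And>j. 1 \<le> j \<Longrightarrow> j < n \<Longrightarrow> r j = 0"
      unfolding Bmon_from_def Bmon_def by auto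
    moreover have "r n < d" using exps_less[OF calculation(1) assms(2) order_refl] .
    moreover have "last_mono n (r n) \<in> exps d n"
      unfolding last_mono_def using calculation(3) assms(1) by (intro restrict_in_exps) auto
    ultimately have "r = last_mono n (r n)" by (intro exps_eqI) (auto simp: val)
    thus "r \<in> last_mono n ` {..<d}" using \<open>r n < d\<close> by blast
  qed
qed

lemma card_Bmon_from:
  assumes "2 \<le> d" "1 \<le> p" "p \<le> n"
  shows "card (Bmon_from d n p) + (d - 1) * d = d + (d - 1) * d * 2 ^ (n - p)"
  using assms(3,2)
proof (induction p rule: inc_induct)
  case base
  thus ?case using bij_betw_same_card[OF bij_betw_last_mono[of d n]] assms(1) by simp
next
  case (step p)
  have "finite (Bmon_from d n (Suc p))" "finite (Bmon_lead d n p)"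
    unfolding Bmon_from_def Bmon_lead_def by auto
  hence "card (Bmon_from d n p) = card (Bmon_from d n (Suc p)) + card (Bmon_lead d n p)"
    by (subst Bmon_from_Suc(1)[OF step.prems])
      (simp add: card_Un_disjoint Bmon_from_Suc(2)[OF step.prems])
  moreover have "card (Bmon_lead d n p) = (d - 1) * d * 2 ^ (n - Suc p)"
    using bij_betw_same_card[OF bij_betw_lead_mono[OF assms(1) step.prems step.hyps(2)]]
    by (simp add: lead_params_def card_cartesian_product card_Pow)
  moreover have "2 ^ (n - p) = 2 * (2 :: nat) ^ (n - Suc p)"
    using step.hyps(2) by (simp flip: power_Suc)
  ultimately show ?case using step.IH step.prems by simp
qed

lemma card_Bmon:
  assumes "2 \<le> d" "1 \<le> n"
  shows "int (card (Bmon d n)) = (2 ^ (n - 1) - 1) * (int d) ^ 2 - (2 ^ (n - 1) - 2) * int d"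
proof -
  have "card (Bmon d n) + (d - 1) * d = d + (d - 1) * d * 2 ^ (n - 1)"
    using card_Bmon_from[OF assms(1) order_refl assms(2)] unfolding Bmon_from_1 .
  from arg_cong[where f=int, OF this]
  have "int (card (Bmon d n)) + int (d - 1) * int d = int d + int (d - 1) * int d * 2 ^ (n - 1)"
    by (simp only: of_nat_add of_nat_mult of_nat_power of_nat_numeral)
  moreover have "int (d - 1) = int d - 1" using assms(1) by simp
  ultimately show ?thesis by (simp add: algebra_simps power2_eq_square)
qed

lemma Bmon_from_eq_Union:
  assumes "1 \<le> p" "p \<le> n"
  shows "Bmon_from d n p = (\<Union>q\<in>{p..<n}. Bmon_lead d n q) \<union> Bmon_from d n n"
  using assms(2,1)
proof (induction p rule: inc_induct)
  case (step p)
  have "{p..<n} = insert p {Suc p..<n}" using step.hyps(2) by auto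
  thus ?case using Bmon_from_Suc(1)[OF step.prems] step.IH step.prems by auto
qed simp

lemma Bset_form_eq_lead_mono:
  assumes "\<forall>j. \<epsilon> j \<in> {0, 1}"
  shows "restrict (\<lambda>j. if j = i then a else if j = i + 1 then b else if j \<ge> i + 2 then \<epsilon> j else 0) {1..n}
       = lead_mono n i (a, b, {j \<in> {i + 2..n}. \<epsilon> j = 1})"
  unfolding lead_mono_eq
proof (rule restrict_ext)
  fix j assume "j \<in> {1..n}"
  thus "(if j = i then a else if j = i + 1 then b else if j \<ge> i + 2 then \<epsilon> j else 0)
      = (if j = i then a else if j = i + 1 then b else if j \<in> {j \<in> {i + 2..n}. \<epsilon> j = 1} then 1 else 0)"
    using assms[rule_format, of j] by auto
qed

lemma Bset_eq_images:
  "Bset d n = (\<Union>q\<in>{1..<n}. lead_mono n q ` lead_params d n q) \<union> last_mono n ` {..<d}"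
proof (intro equalityI subsetI)
  fix r assume "r \<in> Bset d n"
  then consider (lead) i a b \<epsilon> where
      "r = restrict (\<lambda>j. if j = i then a else if j = i + 1 then b
                     else if j \<ge> i + 2 then \<epsilon> j else 0) {1..n}"
      "1 \<le> i" "i < n" "1 \<le> a" "a < d" "b < d" "\<forall>j. \<epsilon> j \<in> {0, 1}"
    | (last) b where "r = last_mono n b" "b < d"
    unfolding Bset_def last_mono_def by blast
  thus "r \<in> (\<Union>q\<in>{1..<n}. lead_mono n q ` lead_params d n q) \<union> last_mono n ` {..<d}"
  proof cases
    case lead
    hence "r = lead_mono n i (a, b, {j \<in> {i + 2..n}. \<epsilon> j = 1})"
      using Bset_form_eq_lead_mono by simp
    moreover have "(a, b, {j \<in> {i + 2..n}. \<epsilon> j = 1}) \<in> lead_params d n i"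
      using lead unfolding lead_params_def by auto
    ultimately show ?thesis using lead(2,3) by auto
  qed auto
next
  fix r assume "r \<in> (\<Union>q\<in>{1..<n}. lead_mono n q ` lead_params d n q) \<union> last_mono n ` {..<d}"
  then consider (lead) i a b S where "r = lead_mono n i (a, b, S)" "1 \<le> i" "i < n"
      "1 \<le> a" "a < d" "b < d" "S \<subseteq> {i + 2..n}"
    | (last) b where "r = last_mono n b" "b < d"
    unfolding lead_params_def by auto
  thus "r \<in> Bset d n"
  proof cases
    case lead
    define \<epsilon> where "\<epsilon> j = (if j \<in> S then 1 else 0 :: nat)" for j
    have "\<forall>j. \<epsilon> j \<in> {0, 1}" "{j \<in> {i + 2..n}. \<epsilon> j = 1} = S"
      using lead(7) unfolding \<epsilon>_def by auto
    hence "r = restrict (\<lambda>j. if j = i then a else if j = i + 1 then b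
                     else if j \<ge> i + 2 then \<epsilon> j else 0) {1..n}"
      using Bset_form_eq_lead_mono[of \<epsilon> i a b n] lead(1) by simp
    thus ?thesis using lead \<open>\<forall>j. \<epsilon> j \<in> {0, 1}\<close> unfolding Bset_def by blast
  next
    case last
    thus ?thesis unfolding Bset_def last_mono_def by blast
  qed
qed

lemma Bset_eq_Bmon:
  assumes "2 \<le> d" "1 \<le> n"
  shows "Bset d n = Bmon d n"
proof -
  have "lead_mono n q ` lead_params d n q = Bmon_lead d n q" if "q \<in> {1..<n}" for q
    using bij_betw_lead_mono[OF assms(1)] that by (simp add: bij_betw_def)
  moreover have "last_mono n ` {..<d} = Bmon_from d n n"
    using bij_betw_last_mono[of d n] assms by (simp add: bij_betw_def)
  ultimately show ?thesis
    using Bmon_from_eq_Union[OF order_refl assms(2), of d] unfolding Bset_eq_images Bmon_from_1 by simp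
qed

lemma Bmon_2: "Bmon 2 n = exps 2 n"
proof -
  have "r k \<le> 1" if "r \<in> exps 2 n" "1 \<le> k" "k \<le> n" for r k
    using exps_less[OF that] by simp
  thus ?thesis unfolding Bmon_def by auto
qed

lemma mdvd_xixk2_iff:
  assumes "1 \<le> i" "i < k" "k \<le> n"
  shows "mdvd n (xixk2 n i k) r \<longleftrightarrow> 1 \<le> r i \<and> 2 \<le> r k"
  using assms unfolding mdvd_def xixk2_def by (auto dest: bspec[of _ _ i] bspec[of _ _ k])

lemma Bmon_eq_not_mdvd:
  "Bmon d n = {r \<in> exps d n. \<not> (\<exists>i k. 1 \<le> i \<and> i < k \<and> k \<le> n \<and> k - i \<ge> 2
                                          \<and> mdvd n (xixk2 n i k) r)}"
proof -
  have "(\<exists>i k. 1 \<le> i \<and> i < k \<and> k \<le> n \<and> k - i \<ge> 2 \<and> mdvd n (xixk2 n i k) r)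
     \<longleftrightarrow> (\<exists>i k. 1 \<le> i \<and> i + 2 \<le> k \<and> k \<le> n \<and> 1 \<le> r i \<and> \<not> r k \<le> 1)" for r
    by (rule ex_cong1, rule ex_cong1) (auto simp: mdvd_xixk2_iff)
  thus ?thesis unfolding Bmon_def by blast
qed

section \<open>Independence of B_{d,n}(1) on the zero set\<close>

lemma two_valued_in_variety:
  assumes "\<alpha> < d" "\<beta> < d" "\<And>j. f j = \<alpha> \<or> f j = \<beta>"
  shows "restrict f {1..n} \<in> variety d n"
proof -
  have "restrict f {1..n} \<in> exps d n" using assms by (intro restrict_in_exps) (metis)
  moreover have "f i = f j \<or> f i = f l \<or> f j = f l" for i j l
    using assms(3)[of i] assms(3)[of j] assms(3)[of l] by auto
  ultimately show ?thesis unfolding variety_def by auto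
qed

lemma chi_Bmon_from:
  assumes "1 \<le> p" "r \<in> Bmon_from d n p"
  shows "chi d n k r = (\<Prod>j\<in>{p..n}. (zeta d ^ k j) ^ r j)"
  unfolding chi_def using assms by (intro prod.mono_neutral_right) (auto simp: Bmon_from_def)

lemma chi_lead_mono:
  assumes "1 \<le> p" "p < n" "S \<subseteq> {p + 2..n}"
  shows "chi d n k (lead_mono n p (a, b, S))
       = (zeta d ^ k p) ^ a * (zeta d ^ k (p + 1)) ^ b * (\<Prod>j\<in>S. zeta d ^ k j)"
proof -
  let ?r = "lead_mono n p (a, b, S)"
  have fin: "finite S" using assms(3) finite_subset by blast
  have "chi d n k ?r = (\<Prod>j\<in>insert p (insert (p + 1) S). (zeta d ^ k j) ^ ?r j)"
    unfolding chi_def using assms by (intro prod.mono_neutral_right) (auto simp: lead_mono_apply)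
  also have "\<dots> = (zeta d ^ k p) ^ ?r p * ((zeta d ^ k (p + 1)) ^ ?r (p + 1) * (\<Prod>j\<in>S. (zeta d ^ k j) ^ ?r j))"
    using assms(3) fin by (subst prod.insert; auto)+
  also have "(\<Prod>j\<in>S. (zeta d ^ k j) ^ ?r j) = (\<Prod>j\<in>S. zeta d ^ k j)"
    using assms by (intro prod.cong refl) (auto simp: lead_mono_apply)
  finally show ?thesis using assms(1,2) by (simp add: lead_mono_apply mult.assoc)
qed

lemma lead_sums_per_subset:
  fixes C :: "nat \<Rightarrow> nat \<Rightarrow> nat set \<Rightarrow> complex"
  assumes M: "finite M"
    and van: "\<And>T. T \<subseteq> M \<Longrightarrow>
      (\<Sum>a\<in>{1..<d}. \<Sum>b<d. \<Sum>S\<in>Pow M. C a b S * ((zeta d ^ \<alpha>) ^ a - (zeta d ^ \<beta>) ^ a) * (zeta d ^ \<alpha>) ^ b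
          * (\<Prod>j\<in>S. if j \<in> T then zeta d ^ \<beta> else zeta d ^ \<alpha>)) = 0"
    and "\<alpha> < d" "\<beta> < d" "S \<subseteq> M"
  shows "(\<Sum>a\<in>{1..<d}. \<Sum>b<d. C a b S * ((zeta d ^ \<alpha>) ^ a - (zeta d ^ \<beta>) ^ a) * (zeta d ^ \<alpha>) ^ b) = 0"
proof (cases "\<alpha> = \<beta>")
  case False
  hence "zeta d ^ \<alpha> \<noteq> zeta d ^ \<beta>" using zeta_pow_inj assms(3,4) by blast
  thus ?thesis
  proof (rule subset_product_coeffs_eq_0[OF M _ _ assms(5)])
    fix T assume "T \<subseteq> M"
    have "(\<Sum>S\<in>Pow M. (\<Sum>a\<in>{1..<d}. \<Sum>b<d. C a b S * ((zeta d ^ \<alpha>) ^ a - (zeta d ^ \<beta>) ^ a) * (zeta d ^ \<alpha>) ^ b)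
            * (\<Prod>j\<in>S. if j \<in> T then zeta d ^ \<beta> else zeta d ^ \<alpha>))
        = (\<Sum>a\<in>{1..<d}. \<Sum>b<d. \<Sum>S\<in>Pow M. C a b S * ((zeta d ^ \<alpha>) ^ a - (zeta d ^ \<beta>) ^ a) * (zeta d ^ \<alpha>) ^ b
            * (\<Prod>j\<in>S. if j \<in> T then zeta d ^ \<beta> else zeta d ^ \<alpha>))"
      unfolding sum_distrib_right by (subst sum.swap, rule sum.cong[OF refl], rule sum.swap)
    thus "(\<Sum>S\<in>Pow M. (\<Sum>a\<in>{1..<d}. \<Sum>b<d. C a b S * ((zeta d ^ \<alpha>) ^ a - (zeta d ^ \<beta>) ^ a) * (zeta d ^ \<alpha>) ^ b)
            * (\<Prod>j\<in>S. if j \<in> T then zeta d ^ \<beta> else zeta d ^ \<alpha>)) = 0"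
      using van[OF \<open>T \<subseteq> M\<close>] by simp
  qed
qed simp

(* Multilinearity in the values on M separates S, a Fourier transform in beta separates a, and a
   Fourier transform in alpha separates b. *)
lemma lead_coeffs_eq_0:
  fixes C :: "nat \<Rightarrow> nat \<Rightarrow> nat set \<Rightarrow> complex"
  assumes M: "finite M"
    and van: "\<And>\<alpha> \<beta> T. \<alpha> < d \<Longrightarrow> \<beta> < d \<Longrightarrow> T \<subseteq> M \<Longrightarrow>
      (\<Sum>a\<in>{1..<d}. \<Sum>b<d. \<Sum>S\<in>Pow M. C a b S * ((zeta d ^ \<alpha>) ^ a - (zeta d ^ \<beta>) ^ a) * (zeta d ^ \<alpha>) ^ b
          * (\<Prod>j\<in>S. if j \<in> T then zeta d ^ \<beta> else zeta d ^ \<alpha>)) = 0"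
    and abS: "1 \<le> a" "a < d" "b < d" "S \<subseteq> M"
  shows "C a b S = 0"
proof -
  define G where "G \<alpha> a = (if a = 0 then 0 else \<Sum>b<d. C a b S * (zeta d ^ \<alpha>) ^ b)" for \<alpha> a
  have "G \<alpha> a = 0" if "\<alpha> < d" for \<alpha>
  proof (rule dft_const_imp_eq_0[OF _ _ abS(2)])
    fix \<beta> assume "\<beta> < d"
    have "(\<Sum>a<d. G \<alpha> a * ((zeta d ^ \<alpha>) ^ a - (zeta d ^ \<beta>) ^ a))
        = (\<Sum>a\<in>{1..<d}. G \<alpha> a * ((zeta d ^ \<alpha>) ^ a - (zeta d ^ \<beta>) ^ a))"
      by (rule sum.mono_neutral_right) (auto simp: G_def)
    also have "\<dots> = (\<Sum>a\<in>{1..<d}. (\<Sum>b<d. C a b S * (zeta d ^ \<alpha>) ^ b) * ((zeta d ^ \<alpha>) ^ a - (zeta d ^ \<beta>) ^ a))"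
      by (intro sum.cong refl) (simp add: G_def)
    also have "\<dots> = (\<Sum>a\<in>{1..<d}. \<Sum>b<d. C a b S * ((zeta d ^ \<alpha>) ^ a - (zeta d ^ \<beta>) ^ a) * (zeta d ^ \<alpha>) ^ b)"
      unfolding sum_distrib_right by (intro sum.cong refl) (simp only: mult_ac)
    also have "\<dots> = 0" using lead_sums_per_subset[OF M van[OF that \<open>\<beta> < d\<close>] that \<open>\<beta> < d\<close> abS(4)] .
    finally show "(\<Sum>a<d. G \<alpha> a * (zeta d ^ \<beta>) ^ a) = (\<Sum>a<d. G \<alpha> a * (zeta d ^ \<alpha>) ^ a)"
      by (simp add: right_diff_distrib sum_subtractf)
  qed (use abS(1) in simp)
  hence "(\<Sum>b<d. C a b S * (zeta d ^ \<alpha>) ^ b) = 0" if "\<alpha> < d" for \<alpha>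
    using that abS(1) by (simp add: G_def)
  from dft_eq_0_imp_eq_0[of d "\<lambda>b. C a b S", OF this abS(3)] show ?thesis by simp
qed

(* Monomials with leading index beyond p do not see the coordinates where kA and kB differ. *)
lemma sum_Bmon_lead_chi_diff:
  assumes "1 \<le> p" "kA \<in> variety d n" "kB \<in> variety d n" "\<And>j. p < j \<Longrightarrow> kA j = kB j"
    and van: "\<And>k. k \<in> variety d n \<Longrightarrow> (\<Sum>r\<in>Bmon_from d n p. c r * chi d n k r) = 0"
  shows "(\<Sum>r\<in>Bmon_lead d n p. c r * (chi d n kA r - chi d n kB r)) = 0"
proof -
  let ?\<Delta> = "\<lambda>r. c r * (chi d n kA r - chi d n kB r)"
  have "(\<Sum>r\<in>Bmon_from d n p. ?\<Delta> r) = 0"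
    using van[OF assms(2)] van[OF assms(3)] by (simp add: right_diff_distrib sum_subtractf)
  moreover have "(\<Sum>r\<in>Bmon_from d n (Suc p). ?\<Delta> r) = 0"
  proof (intro sum.neutral ballI)
    fix r assume r: "r \<in> Bmon_from d n (Suc p)"
    have "chi d n kA r = (\<Prod>j\<in>{Suc p..n}. (zeta d ^ kA j) ^ r j)" using chi_Bmon_from[of "Suc p" r d n kA] r by simp
    also have "\<dots> = (\<Prod>j\<in>{Suc p..n}. (zeta d ^ kB j) ^ r j)" using assms(4) by (intro prod.cong) auto
    also have "\<dots> = chi d n kB r" using chi_Bmon_from[of "Suc p" r d n kB] r by simp
    finally show "?\<Delta> r = 0" by simp
  qed
  moreover have "finite (Bmon_from d n (Suc p))" "finite (Bmon_lead d n p)"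
    unfolding Bmon_from_def Bmon_lead_def by auto
  ultimately show ?thesis using Bmon_from_Suc[OF assms(1)] by (simp add: sum.union_disjoint)
qed

lemma lead_sums_vanish:
  assumes "2 \<le> d" "1 \<le> p" "p < n"
    and van: "\<And>k. k \<in> variety d n \<Longrightarrow> (\<Sum>r\<in>Bmon_from d n p. c r * chi d n k r) = 0"
    and "\<alpha> < d" "\<beta> < d" "T \<subseteq> {p + 2..n}"
  shows "(\<Sum>a\<in>{1..<d}. \<Sum>b<d. \<Sum>S\<in>Pow {p + 2..n}.
           c (lead_mono n p (a, b, S)) * ((zeta d ^ \<alpha>) ^ a - (zeta d ^ \<beta>) ^ a) * (zeta d ^ \<alpha>) ^ b
           * (\<Prod>j\<in>S. if j \<in> T then zeta d ^ \<beta> else zeta d ^ \<alpha>)) = 0"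
proof -
  define y where "y j = (if j \<in> T then \<beta> else \<alpha>)" for j
  define kA where "kA = restrict (\<lambda>j. if j \<le> p + 1 then \<alpha> else y j) {1..n}"
  define kB where "kB = restrict (\<lambda>j. if j \<le> p then \<beta> else if j = p + 1 then \<alpha> else y j) {1..n}"
  let ?\<Delta> = "\<lambda>r. c r * (chi d n kA r - chi d n kB r)"
  have "kA \<in> variety d n" unfolding kA_def by (rule two_valued_in_variety[OF assms(5,6)]) (simp add: y_def)
  moreover have "kB \<in> variety d n" unfolding kB_def by (rule two_valued_in_variety[OF assms(5,6)]) (simp add: y_def)
  ultimately have "(\<Sum>r\<in>Bmon_lead d n p. ?\<Delta> r) = 0"
    by (rule sum_Bmon_lead_chi_diff[OF assms(2) _ _ _ van]) (simp add: kA_def kB_def)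
  have summand: "?\<Delta> (lead_mono n p (a, b, S))
      = c (lead_mono n p (a, b, S)) * ((zeta d ^ \<alpha>) ^ a - (zeta d ^ \<beta>) ^ a) * (zeta d ^ \<alpha>) ^ b
           * (\<Prod>j\<in>S. if j \<in> T then zeta d ^ \<beta> else zeta d ^ \<alpha>)"
    if "S \<in> Pow {p + 2..n}" for a b S
  proof -
    have "zeta d ^ kA j = (if j \<in> T then zeta d ^ \<beta> else zeta d ^ \<alpha>)"
         "zeta d ^ kB j = (if j \<in> T then zeta d ^ \<beta> else zeta d ^ \<alpha>)" if "j \<in> S" for j
      using that \<open>S \<in> Pow {p + 2..n}\<close> by (auto simp: kA_def kB_def y_def)
    hence "(\<Prod>j\<in>S. zeta d ^ kA j) = (\<Prod>j\<in>S. if j \<in> T then zeta d ^ \<beta> else zeta d ^ \<alpha>)"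
          "(\<Prod>j\<in>S. zeta d ^ kB j) = (\<Prod>j\<in>S. if j \<in> T then zeta d ^ \<beta> else zeta d ^ \<alpha>)"
      by (simp_all cong: prod.cong)
    moreover have "kA p = \<alpha>" "kA (p + 1) = \<alpha>" "kB p = \<beta>" "kB (p + 1) = \<alpha>"
      using assms(2,3) by (simp_all add: kA_def kB_def)
    ultimately show ?thesis
      using that assms(2,3) by (simp add: chi_lead_mono algebra_simps)
  qed
  have "0 = (\<Sum>x\<in>lead_params d n p. ?\<Delta> (lead_mono n p x))"
    using \<open>(\<Sum>r\<in>Bmon_lead d n p. ?\<Delta> r) = 0\<close>
    by (simp only: sum.reindex_bij_betw[OF bij_betw_lead_mono[OF assms(1-3)], of ?\<Delta>])
  also have "\<dots> = (\<Sum>a\<in>{1..<d}. \<Sum>b<d. \<Sum>S\<in>Pow {p + 2..n}. ?\<Delta> (lead_mono n p (a, b, S)))"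
    unfolding lead_params_def sum.cartesian_product by (rule sum.cong) auto
  also have "\<dots> = (\<Sum>a\<in>{1..<d}. \<Sum>b<d. \<Sum>S\<in>Pow {p + 2..n}.
           c (lead_mono n p (a, b, S)) * ((zeta d ^ \<alpha>) ^ a - (zeta d ^ \<beta>) ^ a) * (zeta d ^ \<alpha>) ^ b
           * (\<Prod>j\<in>S. if j \<in> T then zeta d ^ \<beta> else zeta d ^ \<alpha>))"
    by (intro sum.cong refl summand)
  finally show ?thesis by simp
qed

lemma coeffs_vanish_on_Bmon_lead:
  assumes "2 \<le> d" "1 \<le> p" "p < n"
    and van: "\<And>k. k \<in> variety d n \<Longrightarrow> (\<Sum>r\<in>Bmon_from d n p. c r * chi d n k r) = 0"
    and r: "r \<in> Bmon_lead d n p"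
  shows "c r = 0"
proof -
  obtain a b S where abS: "(a, b, S) \<in> lead_params d n p" "r = lead_mono n p (a, b, S)"
    using Bmon_lead_eq_lead_mono[OF assms(1-3) r] by blast
  have "c (lead_mono n p (a, b, S)) = 0"
  proof (rule lead_coeffs_eq_0[where C = "\<lambda>a b S. c (lead_mono n p (a, b, S))" and M = "{p + 2..n}"])
    show "1 \<le> a" "a < d" "b < d" "S \<subseteq> {p + 2..n}"
      using abS(1) unfolding lead_params_def by auto
  qed (use lead_sums_vanish[OF assms(1-4)] in simp_all)
  thus ?thesis using abS(2) by simp
qed

lemma coeffs_vanish_on_Bmon_last:
  assumes "0 < d" "1 \<le> n"
    and van: "\<And>k. k \<in> variety d n \<Longrightarrow> (\<Sum>r\<in>Bmon_from d n n. c r * chi d n k r) = 0"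
    and r: "r \<in> Bmon_from d n n"
  shows "c r = 0"
proof -
  have bij: "bij_betw (last_mono n) {..<d} (Bmon_from d n n)"
    by (rule bij_betw_last_mono[OF assms(1,2)])
  then obtain b where b: "b < d" "r = last_mono n b" using r by (auto simp: bij_betw_def)
  have "(\<Sum>b<d. c (last_mono n b) * (zeta d ^ \<alpha>) ^ b) = 0" if "\<alpha> < d" for \<alpha>
  proof -
    let ?k = "restrict (\<lambda>_. \<alpha>) {1..n}"
    have "chi d n ?k (last_mono n b) = (\<Prod>j\<in>{1..n}. if j = n then (zeta d ^ \<alpha>) ^ b else 1)" for b
      unfolding chi_def last_mono_def by (rule prod.cong) auto
    hence "(\<Sum>b<d. c (last_mono n b) * (zeta d ^ \<alpha>) ^ b) = (\<Sum>b<d. c (last_mono n b) * chi d n ?k (last_mono n b))"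
      using assms(2) by simp
    also have "\<dots> = (\<Sum>r\<in>Bmon_from d n n. c r * chi d n ?k r)"
      by (rule sum.reindex_bij_betw[OF bij])
    also have "\<dots> = 0" using that by (intro van two_valued_in_variety) auto
    finally show ?thesis .
  qed
  from dft_eq_0_imp_eq_0[of d "\<lambda>b. c (last_mono n b)", OF this b(1)] show ?thesis
    using b(2) by simp
qed

lemma coeffs_vanish_on_Bmon:
  assumes "2 \<le> d" "1 \<le> n"
    and van: "\<And>k. k \<in> variety d n \<Longrightarrow> (\<Sum>r\<in>Bmon d n. c r * chi d n k r) = 0"
  shows "\<forall>r\<in>Bmon d n. c r = 0"
proof -
  have "\<forall>r\<in>Bmon_from d n p. c r = 0"
    if "1 \<le> p" "p \<le> n" "\<And>k. k \<in> variety d n \<Longrightarrow> (\<Sum>r\<in>Bmon_from d n p. c r * chi d n k r) = 0" for p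
    using that(2,1,3)
  proof (induction p rule: inc_induct)
    case base
    thus ?case using coeffs_vanish_on_Bmon_last[OF _ assms(2) base.prems(2)] assms(1) by auto
  next
    case (step p)
    have lead: "\<forall>r\<in>Bmon_lead d n p. c r = 0"
      using coeffs_vanish_on_Bmon_lead[OF assms(1) step.prems(1) step.hyps(2) step.prems(2)] by blast
    have fin: "finite (Bmon_from d n (Suc p))" "finite (Bmon_lead d n p)"
      unfolding Bmon_from_def Bmon_lead_def by auto
    have "(\<Sum>r\<in>Bmon_from d n (Suc p). c r * chi d n k r) = 0" if "k \<in> variety d n" for k
      using step.prems(2)[OF that] lead fin Bmon_from_Suc[OF step.prems(1)]
      by (simp add: sum.union_disjoint)
    thus ?case using step.IH lead Bmon_from_Suc(1)[OF step.prems(1)] by auto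
  qed
  thus ?thesis using assms van unfolding Bmon_from_1[symmetric] by blast
qed

section \<open>Bases of the quotient\<close>

context vector_space
begin

lemma independent_image_if_scalars_zero:
  assumes "finite I" and zero: "\<And>u. (\<Sum>i\<in>I. u i *s F i) = 0 \<Longrightarrow> \<forall>i\<in>I. u i = 0"
  shows "inj_on F I" and "independent (F ` I)"
proof -
  show inj: "inj_on F I"
  proof (rule inj_onI, rule ccontr)
    fix i j assume ij: "i \<in> I" "j \<in> I" "F i = F j" "i \<noteq> j"
    define u where "u x = (if x = i then 1 else if x = j then - 1 else (0 :: 'a))" for x
    have "(\<Sum>x\<in>I. u x *s F x) = (\<Sum>x\<in>I. (if x = i then F i else 0) - (if x = j then F j else 0))"
      unfolding u_def using ij(4) by (intro sum.cong refl) auto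
    also have "\<dots> = 0" using ij(1-3) assms(1) by (simp add: sum_subtractf)
    finally have "u i = 0" using zero ij(1) by blast
    thus False by (simp add: u_def)
  qed
  show "independent (F ` I)"
  proof (rule independent_if_scalars_zero)
    fix f v assume "(\<Sum>x\<in>F ` I. f x *s x) = 0" "v \<in> F ` I"
    moreover from this(1) have "(\<Sum>i\<in>I. f (F i) *s F i) = 0" by (simp add: sum.reindex[OF inj])
    hence "\<forall>i\<in>I. f (F i) = 0" by (rule zero)
    ultimately show "f v = 0" by blast
  qed (use assms(1) in simp)
qed

lemma independent_spans_if_card_ge:
  assumes "finite D" "independent D" "B \<subseteq> span D" "independent B" "card D \<le> card B"
  shows "D \<subseteq> span B"
proof (rule ccontr)
  assume "\<not> D \<subseteq> span B"
  then obtain x where x: "x \<in> D" "x \<notin> span B" by blast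
  have "finite B" using independent_span_bound[OF assms(1,4,3)] by simp
  moreover have "x \<notin> B" using x(2) span_base by blast
  moreover have "card (insert x B) \<le> card D"
    using independent_span_bound[OF assms(1) independent_insertI[OF x(2) assms(4)]] assms(3) x(1) span_base
    by blast
  ultimately show False using assms(5) by simp
qed

end

definition fscale :: "complex \<Rightarrow> elem \<Rightarrow> elem" where
  "fscale c a = (\<lambda>r. c * a r)"

interpretation elem: vector_space fscale
  by unfold_locales (auto simp: fscale_def fun_eq_iff algebra_simps)

lemma sum_elem_apply: "(\<Sum>x\<in>A. (f x :: elem)) r = (\<Sum>x\<in>A. f x r)"
  by (induction A rule: infinite_finite_induct) auto

definition ev_variety :: "nat \<Rightarrow> nat \<Rightarrow> elem \<Rightarrow> elem" where
  "ev_variety d n a = (\<lambda>k. if k \<in> variety d n then eval_char d n k a else 0)"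

lemma ev_variety_lincomb: "ev_variety d n (lincomb I c b) = (\<Sum>i\<in>I. fscale (c i) (ev_variety d n (b i)))"
  by (rule ext) (simp add: ev_variety_def sum_elem_apply fscale_def eval_char_lincomb)

lemma ev_variety_gsub: "ev_variety d n (gsub a b) = ev_variety d n a - ev_variety d n b"
  by (rule ext) (simp add: ev_variety_def eval_char_sub)

lemma ev_variety_eq_0_iff:
  assumes "2 \<le> d" "a \<in> GA d n" shows "ev_variety d n a = 0 \<longleftrightarrow> a \<in> R1 d n"
  using assms by (auto simp: mem_R1_iff fun_eq_iff ev_variety_def)

lemma ev_variety_idempotent:
  assumes "0 < d" "k \<in> variety d n" shows "ev_variety d n (idempotent d n k) = mono d n k"
proof
  fix k'
  have "k \<in> exps d n" using assms(2) by (simp add: variety_def)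
  thus "ev_variety d n (idempotent d n k) k' = mono d n k k'"
    using assms by (cases "k' \<in> variety d n") (auto simp: ev_variety_def mono_def variety_def eval_char_idempotent)
qed

lemma mono_sum_delta: "(\<Sum>k\<in>A. fscale (f k) (mono d n k)) r = (if r \<in> A then f r else 0)" if "finite A"
  using that by (simp add: sum_elem_apply fscale_def mono_def if_distrib[of "\<lambda>x. _ * x"] cong: if_cong)

lemma ev_variety_in_span: "ev_variety d n a \<in> elem.span (mono d n ` variety d n)"
proof -
  have "ev_variety d n a = (\<Sum>k\<in>variety d n. fscale (ev_variety d n a k) (mono d n k))"
    by (rule ext) (simp add: mono_sum_delta ev_variety_def)
  also have "\<dots> \<in> elem.span (mono d n ` variety d n)"
    by (intro elem.span_sum elem.span_scale elem.span_base) auto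
  finally show ?thesis .
qed

lemma inj_mono: "inj (mono d n)"
  by (rule injI) (metis mono_def zero_neq_one)

lemma independent_mono_variety: "elem.independent (mono d n ` variety d n)"
  by (rule elem.independent_image_if_scalars_zero[OF finite_variety])
    (metis mono_sum_delta finite_variety zero_fun_def)

lemma card_mono_variety: "card (mono d n ` variety d n) = card (variety d n)"
  by (rule card_image[OF inj_on_subset[OF inj_mono subset_UNIV]])

lemma ev_variety_family_independent:
  assumes "2 \<le> d" "finite I" "\<And>i. i \<in> I \<Longrightarrow> b i \<in> GA d n"
    and indep: "\<And>c. lincomb I c b \<in> R1 d n \<Longrightarrow> \<forall>i\<in>I. c i = 0"
  shows "inj_on (\<lambda>i. ev_variety d n (b i)) I"
    and "elem.independent ((\<lambda>i. ev_variety d n (b i)) ` I)"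
proof -
  have zero: "\<forall>i\<in>I. u i = 0" if "(\<Sum>i\<in>I. fscale (u i) (ev_variety d n (b i))) = 0" for u
  proof (rule indep)
    have "ev_variety d n (lincomb I u b) = 0" using that by (simp only: ev_variety_lincomb)
    thus "lincomb I u b \<in> R1 d n" using assms(1,3) lincomb_in_GA ev_variety_eq_0_iff by blast
  qed
  thus "inj_on (\<lambda>i. ev_variety d n (b i)) I" "elem.independent ((\<lambda>i. ev_variety d n (b i)) ` I)"
    using elem.independent_image_if_scalars_zero[where F = "\<lambda>i. ev_variety d n (b i)", OF assms(2) zero]
    by simp_all
qed

lemma quot_basis_card:
  assumes "2 \<le> d" and qb: "quot_basis (GA d n) (R1 d n) I b"
  shows "card I = card (variety d n)"
proof -
  have fin: "finite I" and bGA: "\<And>i. i \<in> I \<Longrightarrow> b i \<in> GA d n"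
    and spans: "\<And>a. a \<in> GA d n \<Longrightarrow> \<exists>c. gsub a (lincomb I c b) \<in> R1 d n"
    and indep: "\<And>c. lincomb I c b \<in> R1 d n \<Longrightarrow> \<forall>i\<in>I. c i = 0"
    using qb unfolding quot_basis_def by auto
  let ?F = "\<lambda>i. ev_variety d n (b i)" and ?D = "mono d n ` variety d n"
  note F = ev_variety_family_independent[OF assms(1) fin bGA indep]
  have "?D \<subseteq> elem.span (?F ` I)"
  proof
    fix x assume "x \<in> ?D"
    then obtain k where k: "k \<in> variety d n" "x = mono d n k" by blast
    obtain c where "gsub (idempotent d n k) (lincomb I c b) \<in> R1 d n"
      using spans[OF idempotent_in_GA] by blast
    moreover from this have "gsub (idempotent d n k) (lincomb I c b) \<in> GA d n"
      using R1_subset_GA[of d n] assms(1) by auto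
    ultimately have "ev_variety d n (gsub (idempotent d n k) (lincomb I c b)) = 0"
      using ev_variety_eq_0_iff[OF assms(1)] by simp
    hence "x = (\<Sum>i\<in>I. fscale (c i) (?F i))"
      using k assms(1) by (simp add: ev_variety_gsub ev_variety_lincomb ev_variety_idempotent)
    also have "\<dots> \<in> elem.span (?F ` I)"
      by (intro elem.span_sum elem.span_scale elem.span_base) auto
    finally show "x \<in> elem.span (?F ` I)" .
  qed
  hence "card ?D \<le> card (?F ` I)"
    using elem.independent_span_bound[OF finite_imageI[OF fin] independent_mono_variety] by simp
  moreover have "?F ` I \<subseteq> elem.span ?D" using ev_variety_in_span by auto
  hence "card (?F ` I) \<le> card ?D"
    using elem.independent_span_bound[OF finite_imageI[OF finite_variety] F(2)] by simp
  ultimately show ?thesis using card_image[OF F(1)] card_mono_variety by simp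
qed

lemma quot_basisI:
  assumes "2 \<le> d" "finite I" "\<And>i. i \<in> I \<Longrightarrow> b i \<in> GA d n"
    and indep: "\<And>c. lincomb I c b \<in> R1 d n \<Longrightarrow> \<forall>i\<in>I. c i = 0"
    and card: "card (variety d n) \<le> card I"
  shows "quot_basis (GA d n) (R1 d n) I b"
proof -
  let ?F = "\<lambda>i. ev_variety d n (b i)" and ?D = "mono d n ` variety d n"
  note F = ev_variety_family_independent[OF assms(1-3) indep]
  have "?F ` I \<subseteq> elem.span ?D" using ev_variety_in_span by auto
  moreover have "card ?D \<le> card (?F ` I)"
    using card card_image[OF F(1)] card_mono_variety by simp
  ultimately have "?D \<subseteq> elem.span (?F ` I)"
    by (intro elem.independent_spans_if_card_ge[OF finite_imageI[OF finite_variety] independent_mono_variety _ F(2)])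
  hence "elem.span ?D \<subseteq> elem.span (elem.span (?F ` I))" by (rule elem.span_mono)
  hence span: "ev_variety d n a \<in> elem.span (?F ` I)" for a
    using ev_variety_in_span unfolding elem.span_span by blast
  have "\<exists>c. gsub a (lincomb I c b) \<in> R1 d n" if "a \<in> GA d n" for a
  proof -
    have "ev_variety d n a \<in> range (\<lambda>u. \<Sum>v\<in>?F ` I. fscale (u v) v)"
      using span[of a] unfolding elem.span_finite[OF finite_imageI[OF assms(2)]] .
    then obtain u where "ev_variety d n a = (\<Sum>v\<in>?F ` I. fscale (u v) v)" by blast
    hence "ev_variety d n a = ev_variety d n (lincomb I (\<lambda>i. u (?F i)) b)"
      by (simp add: sum.reindex[OF F(1)] ev_variety_lincomb)
    hence "ev_variety d n (gsub a (lincomb I (\<lambda>i. u (?F i)) b)) = 0" by (simp add: ev_variety_gsub)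
    moreover have "gsub a (lincomb I (\<lambda>i. u (?F i)) b) \<in> GA d n"
      using that lincomb_in_GA[of I b d n, OF assms(3)] by (auto simp: GA_def gsub_def)
    ultimately show ?thesis using ev_variety_eq_0_iff[OF assms(1)] by auto
  qed
  thus ?thesis using assms(2,3) indep unfolding quot_basis_def by simp
qed

lemma quot_dim_eqI:
  assumes "quot_basis A R (I :: (nat \<Rightarrow> nat) set) b"
    and "\<And>(J :: (nat \<Rightarrow> nat) set) c. quot_basis A R J c \<Longrightarrow> card J = card I"
  shows "quot_dim A R = card I"
  unfolding quot_dim_def by (rule the_equality) (use assms in blast)+

section \<open>Two-valued characters and B_{d,n}(1)\<close>

lemma variety_two_values:
  assumes "k \<in> variety d n" "1 < m" "m \<le> n" "k m \<noteq> k 1" "1 \<le> j" "j \<le> n"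
  shows "k j = k 1 \<or> k j = k m"
proof -
  have tri: "k i = k j' \<or> k i = k l \<or> k j' = k l" if "1 \<le> i" "i < j'" "j' < l" "l \<le> n" for i j' l
    using assms(1) that unfolding variety_def by blast
  consider "j = 1" | "j = m" | "1 < j" "j < m" | "m < j" using assms(5) by linarith
  thus ?thesis
  proof cases
    case 3 thus ?thesis using tri[of 1 j m] assms(3,4) by auto
  next
    case 4 thus ?thesis using tri[of 1 m j] assms(2,4,6) by auto
  qed simp_all
qed

definition nonconst :: "nat \<Rightarrow> (nat \<Rightarrow> nat) \<Rightarrow> bool" where
  "nonconst n k \<longleftrightarrow> (\<exists>j. 1 < j \<and> j \<le> n \<and> k j \<noteq> k 1)"

definition first_change :: "nat \<Rightarrow> (nat \<Rightarrow> nat) \<Rightarrow> nat" where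
  "first_change n k = (LEAST j. 1 < j \<and> j \<le> n \<and> k j \<noteq> k 1)"

definition change_set :: "nat \<Rightarrow> (nat \<Rightarrow> nat) \<Rightarrow> nat set" where
  "change_set n k = {j \<in> {first_change n k + 1..n}. k j \<noteq> k 1}"

definition change_params :: "nat \<Rightarrow> nat \<Rightarrow> (nat \<Rightarrow> nat) \<Rightarrow> nat \<times> nat \<times> nat set" where
  "change_params d n k = ((k (first_change n k) + d - k 1) mod d, k 1, change_set n k)"

(* A nonconstant two-valued k equals u = k 1 before its first change m and takes only the values
   u and v = k m afterwards; it goes to x_(m-1)^(v-u) x_m^u times the x_j with j > m and k j = v. *)
definition variety_to_Bmon :: "nat \<Rightarrow> nat \<Rightarrow> (nat \<Rightarrow> nat) \<Rightarrow> (nat \<Rightarrow> nat)" where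
  "variety_to_Bmon d n k =
     (if nonconst n k then lead_mono n (first_change n k - 1) (change_params d n k) else last_mono n (k 1))"

lemma first_change:
  assumes "nonconst n k"
  shows "1 < first_change n k" "first_change n k \<le> n" "k (first_change n k) \<noteq> k 1"
    and "\<And>j. 1 \<le> j \<Longrightarrow> j < first_change n k \<Longrightarrow> k j = k 1"
proof -
  note ex = assms[unfolded nonconst_def]
  show "1 < first_change n k" "first_change n k \<le> n" "k (first_change n k) \<noteq> k 1"
    using LeastI_ex[OF ex] unfolding first_change_def by auto
  fix j assume "1 \<le> j" "j < first_change n k"
  thus "k j = k 1"
    using not_less_Least[of j "\<lambda>j. 1 < j \<and> j \<le> n \<and> k j \<noteq> k 1"] \<open>first_change n k \<le> n\<close>
    unfolding first_change_def by (cases "j = 1") auto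
qed

lemma variety_eq_by_change:
  assumes "k \<in> variety d n" "nonconst n k" "1 \<le> j" "j \<le> n"
  shows "k j = (if j = first_change n k \<or> j \<in> change_set n k then k (first_change n k) else k 1)"
proof -
  note m = first_change[OF assms(2)]
  consider "j < first_change n k" | "j = first_change n k" | "first_change n k < j" by linarith
  thus ?thesis
  proof cases
    case 1 thus ?thesis using m(4)[OF assms(3) 1] by (simp add: change_set_def)
  next
    case 3
    hence "j \<in> change_set n k \<longleftrightarrow> k j \<noteq> k 1" using assms(4) by (auto simp: change_set_def)
    thus ?thesis using 3 variety_two_values[OF assms(1) m(1-3) assms(3,4)] by auto
  qed simp
qed

lemma variety_eqI_change:
  assumes "k \<in> variety d n" "k' \<in> variety d n" "nonconst n k" "nonconst n k'"
    and "first_change n k = first_change n k'" "k 1 = k' 1"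
    and "k (first_change n k) = k' (first_change n k')" "change_set n k = change_set n k'"
  shows "k = k'"
proof (rule exps_eqI)
  show "k \<in> exps d n" "k' \<in> exps d n" using assms(1,2) by (simp_all add: variety_def)
  fix j assume "1 \<le> j" "j \<le> n"
  thus "k j = k' j"
    using variety_eq_by_change[OF assms(1,3) \<open>1 \<le> j\<close> \<open>j \<le> n\<close>]
      variety_eq_by_change[OF assms(2,4) \<open>1 \<le> j\<close> \<open>j \<le> n\<close>] assms(5-8) by simp
qed

lemma variety_eqI_const:
  assumes "k \<in> variety d n" "k' \<in> variety d n" "\<not> nonconst n k" "\<not> nonconst n k'" "k 1 = k' 1"
  shows "k = k'"
proof (rule exps_eqI)
  show "k \<in> exps d n" "k' \<in> exps d n" using assms(1,2) by (simp_all add: variety_def)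
  fix j assume "1 \<le> j" "j \<le> n"
  thus "k j = k' j" using assms(3-5) unfolding nonconst_def by (cases "j = 1") auto
qed

lemma mod_diff_cancel:
  fixes a a' b d :: nat
  assumes "a < d" "a' < d" "b < d" "(a + d - b) mod d = (a' + d - b) mod d"
  shows "a = a'"
proof -
  have "((x + d - b) mod d + b) mod d = x" if "x < d" for x
  proof -
    have "((x + d - b) mod d + b) mod d = (x + d - b + b) mod d" by (rule mod_add_left_eq)
    thus ?thesis using that assms(3) by simp
  qed
  thus ?thesis using assms by metis
qed

lemma change_params_in_lead_params:
  assumes "2 \<le> d" "k \<in> variety d n" "nonconst n k"
  shows "change_params d n k \<in> lead_params d n (first_change n k - 1)"
proof -
  note m = first_change[OF assms(3)]
  have lt: "k j < d" if "1 \<le> j" "j \<le> n" for j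
    using assms(2) that exps_less unfolding variety_def by blast
  have "(k (first_change n k) + d - k 1) mod d \<noteq> 0"
    using mod_diff_cancel[of "k (first_change n k)" d "k 1" "k 1"] lt m(1-3) by auto
  moreover have "first_change n k - 1 + 2 = first_change n k + 1" using m(1) by simp
  ultimately show ?thesis
    using lt[of 1] m(2) assms(1) unfolding lead_params_def change_params_def change_set_def by auto
qed

lemma variety_to_Bmon_lead:
  assumes "2 \<le> d" "k \<in> variety d n" "nonconst n k"
  shows "1 \<le> first_change n k - 1" "first_change n k - 1 < n"
    and "variety_to_Bmon d n k \<in> Bmon_lead d n (first_change n k - 1)"
proof -
  show p: "1 \<le> first_change n k - 1" "first_change n k - 1 < n"
    using first_change(1,2)[OF assms(3)] by auto
  have "variety_to_Bmon d n k = lead_mono n (first_change n k - 1) (change_params d n k)"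
    using assms(3) by (simp add: variety_to_Bmon_def)
  thus "variety_to_Bmon d n k \<in> Bmon_lead d n (first_change n k - 1)"
    using lead_mono_in_Bmon_lead[OF assms(1) p change_params_in_lead_params[OF assms]] by simp
qed

lemma variety_to_Bmon_last:
  assumes "2 \<le> d" "1 \<le> n" "k \<in> variety d n" "\<not> nonconst n k"
  shows "variety_to_Bmon d n k \<in> Bmon_from d n n"
proof -
  have "k 1 < d" using assms(2,3) exps_less unfolding variety_def by blast
  moreover have "variety_to_Bmon d n k = last_mono n (k 1)"
    using assms(4) by (simp add: variety_to_Bmon_def)
  moreover have "bij_betw (last_mono n) {..<d} (Bmon_from d n n)"
    using assms(1,2) by (intro bij_betw_last_mono) auto
  ultimately show ?thesis using bij_betw_apply by fastforce
qed

lemma Bmon_lead_index_unique: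
  assumes "1 \<le> p" "1 \<le> p'" "r \<in> Bmon_lead d n p" "r \<in> Bmon_lead d n p'"
  shows "p = p'"
proof (rule ccontr)
  assume "p \<noteq> p'"
  then consider "p < p'" | "p' < p" by linarith
  thus False
    using Bmon_leadD(2,3)[OF assms(1,3)] Bmon_leadD(2,3)[OF assms(2,4)] assms(1,2) by cases auto
qed

lemma variety_to_Bmon_lead_neq_last:
  assumes "2 \<le> d" "1 \<le> n" "k \<in> variety d n" "k' \<in> variety d n" "nonconst n k" "\<not> nonconst n k'"
  shows "variety_to_Bmon d n k \<noteq> variety_to_Bmon d n k'"
proof
  note lead = variety_to_Bmon_lead[OF assms(1,3,5)]
  assume "variety_to_Bmon d n k = variety_to_Bmon d n k'"
  hence "variety_to_Bmon d n k \<in> Bmon_from d n n" using variety_to_Bmon_last[OF assms(1,2,4,6)] by simp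
  thus False using lead(1-3) unfolding Bmon_lead_def Bmon_from_def by auto
qed

lemma variety_to_Bmon_inj_nonconst:
  assumes "2 \<le> d" "k \<in> variety d n" "k' \<in> variety d n" "nonconst n k" "nonconst n k'"
    and eq: "variety_to_Bmon d n k = variety_to_Bmon d n k'"
  shows "k = k'"
proof -
  note m = variety_to_Bmon_lead[OF assms(1,2,4)] and m' = variety_to_Bmon_lead[OF assms(1,3,5)]
  have lt: "k j < d" "k' j < d" if "1 \<le> j" "j \<le> n" for j
    using assms(2,3) that exps_less unfolding variety_def by blast+
  have "first_change n k - 1 = first_change n k' - 1"
    using Bmon_lead_index_unique[OF m(1) m'(1) m(3)] m'(3) eq by simp
  hence fc: "first_change n k = first_change n k'"
    using first_change(1)[OF assms(4)] first_change(1)[OF assms(5)] by simp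
  have "lead_mono n (first_change n k - 1) (change_params d n k)
      = lead_mono n (first_change n k - 1) (change_params d n k')"
    using eq assms(4,5) fc by (simp add: variety_to_Bmon_def)
  hence "change_params d n k = change_params d n k'"
    using bij_betw_lead_mono[OF assms(1) m(1,2)] change_params_in_lead_params[OF assms(1,2,4)]
      change_params_in_lead_params[OF assms(1,3,5)] fc
    unfolding bij_betw_def inj_on_def by simp
  hence params: "(k (first_change n k) + d - k 1) mod d = (k' (first_change n k') + d - k' 1) mod d"
      "k 1 = k' 1" "change_set n k = change_set n k'"
    unfolding change_params_def prod.inject by blast+
  have range: "1 \<le> first_change n k" "first_change n k \<le> n" using first_change(1,2)[OF assms(4)] by simp_all
  have "(k (first_change n k) + d - k' 1) mod d = (k' (first_change n k') + d - k' 1) mod d"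
    using params(1) unfolding params(2) .
  moreover have "k' 1 < d" using lt(2)[of 1] range by simp
  ultimately have "k (first_change n k) = k' (first_change n k')"
    using mod_diff_cancel[OF lt(1)[OF range] lt(2)[OF range[unfolded fc]]] by blast
  thus ?thesis using variety_eqI_change[OF assms(2-5) fc params(2)] params(3) by simp
qed

lemma inj_on_variety_to_Bmon:
  assumes "2 \<le> d" "1 \<le> n"
  shows "inj_on (variety_to_Bmon d n) (variety d n)"
proof (rule inj_onI)
  fix k k' assume k: "k \<in> variety d n" and k': "k' \<in> variety d n"
    and eq: "variety_to_Bmon d n k = variety_to_Bmon d n k'"
  consider (lead) "nonconst n k" "nonconst n k'" | (last) "\<not> nonconst n k" "\<not> nonconst n k'"
    | (mixed) "nonconst n k" "\<not> nonconst n k'" | (mixed') "\<not> nonconst n k" "nonconst n k'" by blast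
  thus "k = k'"
  proof cases
    case lead
    thus ?thesis using variety_to_Bmon_inj_nonconst[OF assms(1) k k' _ _ eq] by blast
  next
    case last
    hence "last_mono n (k 1) = last_mono n (k' 1)" using eq by (simp add: variety_to_Bmon_def)
    moreover have "inj_on (last_mono n) {..<d}" using bij_betw_last_mono[of d n] assms by (simp add: bij_betw_def)
    moreover have "k 1 < d" "k' 1 < d" using k k' assms(2) exps_less unfolding variety_def by blast+
    ultimately have "k 1 = k' 1" by (simp add: inj_on_def)
    thus ?thesis using variety_eqI_const[OF k k' last] by simp
  next
    case mixed
    thus ?thesis using variety_to_Bmon_lead_neq_last[OF assms k k' mixed] eq by simp
  next
    case mixed'
    thus ?thesis using variety_to_Bmon_lead_neq_last[OF assms k' k mixed'(2,1)] eq by simp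
  qed
qed

lemma card_variety_le_card_Bmon:
  assumes "2 \<le> d" "1 \<le> n"
  shows "card (variety d n) \<le> card (Bmon d n)"
proof (rule card_inj_on_le[OF inj_on_variety_to_Bmon[OF assms] _ finite_Bmon])
  show "variety_to_Bmon d n ` variety d n \<subseteq> Bmon d n"
  proof
    fix r assume "r \<in> variety_to_Bmon d n ` variety d n"
    then obtain k where k: "k \<in> variety d n" "r = variety_to_Bmon d n k" by blast
    show "r \<in> Bmon d n"
    proof (cases "nonconst n k")
      case True
      thus ?thesis using variety_to_Bmon_lead(3)[OF assms(1) k(1) True] k(2)
        unfolding Bmon_lead_def Bmon_from_def by auto
    next
      case False
      thus ?thesis using variety_to_Bmon_last[OF assms k(1) False] k(2) unfolding Bmon_from_def by auto
    qed
  qed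
qed

lemma Bmon_quot_basis:
  assumes "2 \<le> d" "1 \<le> n"
  shows "quot_basis (GA d n) (R1 d n) (Bmon d n) (mono d n)"
proof (rule quot_basisI[OF assms(1) finite_Bmon _ _ card_variety_le_card_Bmon[OF assms]])
  show "mono d n r \<in> GA d n" if "r \<in> Bmon d n" for r
    using that Bmon_subset_exps unfolding GA_def mono_def by auto
  fix c assume "lincomb (Bmon d n) c (mono d n) \<in> R1 d n"
  hence "eval_char d n k (lincomb (Bmon d n) c (mono d n)) = 0" if "k \<in> variety d n" for k
    using that assms(1) mem_R1_iff by blast
  hence "(\<Sum>r\<in>Bmon d n. c r * chi d n k r) = 0" if "k \<in> variety d n" for k
    using that Bmon_subset_exps by (simp add: eval_char_lincomb eval_char_mono subset_iff cong: sum.cong)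
  thus "\<forall>r\<in>Bmon d n. c r = 0" by (rule coeffs_vanish_on_Bmon[OF assms])
qed

theorem mainTheorem17:
  fixes d n :: nat
  assumes "d \<ge> 2" and "n \<ge> 1"
  shows "int (quot_dim (GA d n) (R1 d n))
           = (2 ^ (n - 1) - 1) * (int d) ^ 2 - (2 ^ (n - 1) - 2) * int d
      \<and> Bset d n \<subseteq> exps d n
      \<and> quot_basis (GA d n) (R1 d n) (Bset d n) (mono d n)
      \<and> (d = 2 \<longrightarrow> Bset d n = exps d n)
      \<and> (d > 2 \<longrightarrow> Bset d n = {r \<in> exps d n. \<not> (\<exists>i k. 1 \<le> i \<and> i < k \<and> k \<le> n \<and> k - i \<ge> 2
                                                   \<and> mdvd n (xixk2 n i k) r)})"
proof -
  have B: "Bset d n = Bmon d n" by (rule Bset_eq_Bmon[OF assms])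
  have basis: "quot_basis (GA d n) (R1 d n) (Bmon d n) (mono d n)" by (rule Bmon_quot_basis[OF assms])
  have "quot_dim (GA d n) (R1 d n) = card (Bmon d n)"
  proof (rule quot_dim_eqI[OF basis])
    fix J :: "(nat \<Rightarrow> nat) set" and c assume "quot_basis (GA d n) (R1 d n) J c"
    thus "card J = card (Bmon d n)"
      using quot_basis_card[OF assms(1)] quot_basis_card[OF assms(1) basis] by simp
  qed
  thus ?thesis
    using card_Bmon[OF assms] basis Bmon_subset_exps Bmon_2 Bmon_eq_not_mdvd unfolding B by simp
qed

end
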